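(* In the setting below, if the operator $K$ has a subinvariant density $f_*$ with $f_*>0$ $m$-a.e., then the minimal semigroup $\{P(t)\}_{t\ge0}$ is stochastic and $\overline f_*=\sup_{\lambda>0}R(\lambda,A)f_*$ satisfies $\overline f_*>0$ $m$-a.e.
   Context: Setting: $(E,\mathcal{E},m)$ is a $\sigma$-finite measure space, $L^1=L^1(E,\mathcal{E},m)$, $L^1_+$ its nonnegative elements, $D(m)=\{f\in L^1_+:\|f\|=1\}$ the densities. A linear operator on $L^1$ is stochastic if it maps $D(m)$ into $D(m)$, substochastic if it is a positive contraction; a (sub)stochastic semigroup is a $C_0$-semigroup of (sub)stochastic operators. A substochastic operator $Q$ is extended to nonnegative measurable $f=\sup_n f_n$ ($0\le f_n\uparrow$, $f_n\in L^1_+$) by $Qf=\sup_nQf_n$ (possibly $+\infty$); $f\ge0$ measurable is subinvariant (invariant) for $Q$ if $Qf\le f$ ($Qf=f$), and for a semigroup if this holds for each $P(t)$. Let $P$ be a stochastic operator on $L^1$, $\varphi\colon E\to[0,\infty)$ measurable, and $\{S(t)\}_{t\ge0}$ a substochastic semigroup with generator $(A,\mathcal{D}(A))$ such that $\mathcal{D}(A)\subseteq L^1_\varphi=\{f\in L^1:\int\varphi|f|\,dm<\infty\}$ and $\int_E Af\,dm=-\int_E\varphi f\,dm$ for all $f\in\mathcal{D}(A)\cap L^1_+$. $R(\lambda,A)=(\lambda-A)^{-1}=\int_0^\infty e^{-\lambda s}S(s)\,ds$ for $\lambda>0$. The minimal semigroup $\{P(t)\}_{t\ge0}$ is the substochastic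 semigroup whose generator $(\mathcal{C},\mathcal{D}(\mathcal{C}))$ is given by $R(\lambda,\mathcal{C})f=\lim_{n\to\infty}R(\lambda,A)\sum_{k=0}^n(P(\varphi R(\lambda,A)))^kf$ for $f\in L^1$, $\lambda>0$; it satisfies $\mathcal{D}(A)\subseteq\mathcal{D}(\mathcal{C})$ and $\mathcal{C}f=Af+P(\varphi f)$ for $f\in\mathcal{D}(A)$. The substochastic operator $K$ on $L^1$ is $Kf=\lim_{\lambda\downarrow0}P(\varphi R(\lambda,A))f$. *)

theory Defs
  imports "HOL-Analysis.Analysis"
begin

text \<open>Elements of L^1(E,E,m) are represented by integrable real functions; all
equalities/inequalities between them are understood m-almost everywhere.
Operators on L^1 are functions on representatives that respect a.e. equality.\<close>

definition l1 :: "'a measure \<Rightarrow> ('a \<Rightarrow> real) \<Rightarrow> bool" where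
  "l1 M f \<longleftrightarrow> integrable M f"

definition l1_dist :: "'a measure \<Rightarrow> ('a \<Rightarrow> real) \<Rightarrow> ('a \<Rightarrow> real) \<Rightarrow> real" where
  "l1_dist M f g = (\<integral>x. \<bar>f x - g x\<bar> \<partial>M)"

definition is_density :: "'a measure \<Rightarrow> ('a \<Rightarrow> real) \<Rightarrow> bool" where
  "is_density M f \<longleftrightarrow> l1 M f \<and> (AE x in M. 0 \<le> f x) \<and> (\<integral>x. f x \<partial>M) = 1"

definition l1_linear :: "'a measure \<Rightarrow> (('a \<Rightarrow> real) \<Rightarrow> ('a \<Rightarrow> real)) \<Rightarrow> bool" where
  "l1_linear M T \<longleftrightarrow>
     (\<forall>f. l1 M f \<longrightarrow> l1 M (T f)) \<and>
     (\<forall>f g. l1 M f \<and> l1 M g \<and> (AE x in M. f x = g x) \<longrightarrow> (AE x in M. T f x = T g x)) \<and>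
     (\<forall>a b f g. l1 M f \<and> l1 M g \<longrightarrow>
        (AE x in M. T (\<lambda>y. a * f y + b * g y) x = a * T f x + b * T g x))"

definition substochastic :: "'a measure \<Rightarrow> (('a \<Rightarrow> real) \<Rightarrow> ('a \<Rightarrow> real)) \<Rightarrow> bool" where
  "substochastic M T \<longleftrightarrow> l1_linear M T \<and>
     (\<forall>f. l1 M f \<and> (AE x in M. 0 \<le> f x) \<longrightarrow> (AE x in M. 0 \<le> T f x)) \<and>
     (\<forall>f. l1 M f \<longrightarrow> (\<integral>x. \<bar>T f x\<bar> \<partial>M) \<le> (\<integral>x. \<bar>f x\<bar> \<partial>M))"

definition stochastic :: "'a measure \<Rightarrow> (('a \<Rightarrow> real) \<Rightarrow> ('a \<Rightarrow> real)) \<Rightarrow> bool" where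
  "stochastic M T \<longleftrightarrow> l1_linear M T \<and> (\<forall>f. is_density M f \<longrightarrow> is_density M (T f))"

text \<open>C_0-semigroups on L^1 (only t \<ge> 0 is relevant)\<close>
definition c0_semigroup :: "'a measure \<Rightarrow> (real \<Rightarrow> ('a \<Rightarrow> real) \<Rightarrow> ('a \<Rightarrow> real)) \<Rightarrow> bool" where
  "c0_semigroup M S \<longleftrightarrow>
     (\<forall>t\<ge>0. l1_linear M (S t)) \<and>
     (\<forall>f. l1 M f \<longrightarrow> (AE x in M. S 0 f x = f x)) \<and>
     (\<forall>s t f. 0 \<le> s \<and> 0 \<le> t \<and> l1 M f \<longrightarrow> (AE x in M. S (s + t) f x = S s (S t f) x)) \<and>
     (\<forall>f. l1 M f \<longrightarrow> ((\<lambda>t. l1_dist M (S t f) f) \<longlongrightarrow> 0) (at_right 0))"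

definition substochastic_semigroup :: "'a measure \<Rightarrow> (real \<Rightarrow> ('a \<Rightarrow> real) \<Rightarrow> ('a \<Rightarrow> real)) \<Rightarrow> bool" where
  "substochastic_semigroup M S \<longleftrightarrow> c0_semigroup M S \<and> (\<forall>t\<ge>0. substochastic M (S t))"

definition stochastic_semigroup :: "'a measure \<Rightarrow> (real \<Rightarrow> ('a \<Rightarrow> real) \<Rightarrow> ('a \<Rightarrow> real)) \<Rightarrow> bool" where
  "stochastic_semigroup M S \<longleftrightarrow> c0_semigroup M S \<and> (\<forall>t\<ge>0. stochastic M (S t))"

text \<open>Graph of the generator: f \<in> D(A) and A f = g\<close>
definition generator :: "'a measure \<Rightarrow> (real \<Rightarrow> ('a \<Rightarrow> real) \<Rightarrow> ('a \<Rightarrow> real))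
    \<Rightarrow> ('a \<Rightarrow> real) \<Rightarrow> ('a \<Rightarrow> real) \<Rightarrow> bool" where
  "generator M S f g \<longleftrightarrow> l1 M f \<and> l1 M g \<and>
     ((\<lambda>t. l1_dist M (\<lambda>x. (S t f x - f x) / t) g) \<longlongrightarrow> 0) (at_right 0)"

text \<open>Resolvent R(\<lambda>,A) f = (\<lambda> - A)^{-1} f: the h \<in> D(A) with A h = \<lambda> h - f\<close>
definition resolvent :: "'a measure \<Rightarrow> (real \<Rightarrow> ('a \<Rightarrow> real) \<Rightarrow> ('a \<Rightarrow> real))
    \<Rightarrow> real \<Rightarrow> ('a \<Rightarrow> real) \<Rightarrow> ('a \<Rightarrow> real)" where
  "resolvent M S l f = (SOME h. generator M S h (\<lambda>x. l * h x - f x))"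

definition PphiR :: "'a measure \<Rightarrow> (('a \<Rightarrow> real) \<Rightarrow> ('a \<Rightarrow> real)) \<Rightarrow> ('a \<Rightarrow> real)
    \<Rightarrow> (real \<Rightarrow> ('a \<Rightarrow> real) \<Rightarrow> ('a \<Rightarrow> real)) \<Rightarrow> real \<Rightarrow> ('a \<Rightarrow> real) \<Rightarrow> ('a \<Rightarrow> real)" where
  "PphiR M P \<phi> S l f = P (\<lambda>x. \<phi> x * resolvent M S l f x)"

end

theory Submission
  imports Defs
begin

(* Write R lam for the resolvent of S, T lam = P (phi * R lam _) and Pt for the minimal semigroup.
   The generator hypothesis gives the mass balance
     lam * integral (R lam f) = integral f - integral (T lam f)      for f >= 0,
   which telescopes along the series defining the resolvent of Pt:
     lam * integral (resolvent Pt lam f) = integral f - lim integral ((T lam)^n f).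
   The limit vanishes.  For f = fstar this is because T lam fstar <= K fstar <= fstar: the iterates
   decrease in L1 to a fixed point g of T lam, the mass balance forces R lam g = 0, hence
   g = T lam g = 0.  Since fstar > 0 a.e., every density is, up to small mass, dominated by a
   multiple of fstar.  Mass conservation of the resolvent of Pt then passes to Pt itself: for
   h = resolvent Pt lam f the deficit r |-> integral h - integral (Pt r h) is nonnegative, starts
   at 0 and grows at most like lam times itself, so it vanishes by a discrete Gronwall argument.
   Strict positivity of R lam fstar is a maximum principle: on {R lam fstar = 0} the resolvent
   equation leaves only -fstar, which must vanish there.

   The resolvent is specified only implicitly, as the solution of the resolvent equation, so its
   existence is proved first: the resolvents of the bounded generators (S d - I)/d are Neumann
   series, and they converge in L1 along d = 2^-n. *)

section \<open>The $L^1$ seminorm\<close>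
definition l1_norm :: "'a measure \<Rightarrow> ('a \<Rightarrow> real) \<Rightarrow> real" where
  "l1_norm M f = (\<integral>x. \<bar>f x\<bar> \<partial>M)"

lemma l1_dist_eq_l1_norm: "l1_dist M f g = l1_norm M (\<lambda>x. f x - g x)"
  by (simp add: l1_dist_def l1_norm_def)

lemma l1_norm_nonneg: "0 \<le> l1_norm M f"
  by (simp add: l1_norm_def)

lemma l1_dist_nonneg: "0 \<le> l1_dist M f g"
  by (simp add: l1_dist_def)

lemma l1_dist_commute: "l1_dist M f g = l1_dist M g f"
  unfolding l1_dist_def by (simp add: abs_minus_commute)

lemma l1_norm_cong_AE:
  assumes "f \<in> borel_measurable M" "g \<in> borel_measurable M" "AE x in M. f x = g x"
  shows "l1_norm M f = l1_norm M g"
  unfolding l1_norm_def by (rule integral_cong_AE) (use assms in auto)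

lemma l1_norm_eq_0_iff:
  assumes "integrable M f"
  shows "l1_norm M f = 0 \<longleftrightarrow> (AE x in M. f x = 0)"
  unfolding l1_norm_def using integral_nonneg_eq_0_iff_AE[of M "\<lambda>x. \<bar>f x\<bar>"] assms by auto

lemma l1_dist_eq_0_iff:
  assumes "integrable M f" "integrable M g"
  shows "l1_dist M f g = 0 \<longleftrightarrow> (AE x in M. f x = g x)"
  using l1_norm_eq_0_iff[of M "\<lambda>x. f x - g x"] assms by (simp add: l1_dist_eq_l1_norm)

lemma l1_norm_triangle:
  assumes "integrable M f" "integrable M g"
  shows "l1_norm M (\<lambda>x. f x + g x) \<le> l1_norm M f + l1_norm M g"
proof -
  have "(\<integral>x. \<bar>f x + g x\<bar> \<partial>M) \<le> (\<integral>x. \<bar>f x\<bar> + \<bar>g x\<bar> \<partial>M)"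
    by (intro integral_mono) (auto intro!: integrable_abs integrable_add assms abs_triangle_ineq)
  also have "\<dots> = (\<integral>x. \<bar>f x\<bar> \<partial>M) + (\<integral>x. \<bar>g x\<bar> \<partial>M)"
    by (rule Bochner_Integration.integral_add; intro integrable_abs assms)
  finally show ?thesis unfolding l1_norm_def .
qed

lemma l1_norm_diff_le:
  assumes "integrable M f" "integrable M g"
  shows "l1_norm M (\<lambda>x. f x - g x) \<le> l1_norm M f + l1_norm M g"
  using l1_norm_triangle[of M f "\<lambda>x. - g x"] assms by (simp add: l1_norm_def)

lemma l1_norm_cmult: "l1_norm M (\<lambda>x. c * f x) = \<bar>c\<bar> * l1_norm M f"
  unfolding l1_norm_def by (simp add: abs_mult)

lemma l1_norm_minus: "l1_norm M (\<lambda>x. - f x) = l1_norm M f"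
  unfolding l1_norm_def by simp

lemma l1_norm_sum_le:
  assumes "finite I" "\<And>i. i \<in> I \<Longrightarrow> integrable M (f i)"
  shows "l1_norm M (\<lambda>x. \<Sum>i\<in>I. f i x) \<le> (\<Sum>i\<in>I. l1_norm M (f i))"
  using assms
proof (induction I rule: finite_induct)
  case empty
  then show ?case by (simp add: l1_norm_def)
next
  case (insert a I)
  have "l1_norm M (\<lambda>x. \<Sum>i\<in>insert a I. f i x) = l1_norm M (\<lambda>x. f a x + (\<Sum>i\<in>I. f i x))"
    using insert.hyps by simp
  also have "\<dots> \<le> l1_norm M (f a) + l1_norm M (\<lambda>x. \<Sum>i\<in>I. f i x)"
    by (rule l1_norm_triangle) (use insert.prems in auto)
  also have "\<dots> \<le> l1_norm M (f a) + (\<Sum>i\<in>I. l1_norm M (f i))"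
    using insert by auto
  finally show ?case using insert.hyps by simp
qed

lemma l1_dist_triangle:
  assumes "integrable M f" "integrable M g" "integrable M h"
  shows "l1_dist M f h \<le> l1_dist M f g + l1_dist M g h"
  using l1_norm_triangle[of M "\<lambda>x. f x - g x" "\<lambda>x. g x - h x"] assms
  by (simp add: l1_dist_eq_l1_norm)

lemma l1_dist_cong_AE:
  assumes "f \<in> borel_measurable M" "f' \<in> borel_measurable M" "g \<in> borel_measurable M"
    "AE x in M. f x = f' x"
  shows "l1_dist M f g = l1_dist M f' g"
  unfolding l1_dist_eq_l1_norm by (rule l1_norm_cong_AE) (use assms in auto)

lemma l1_norm_mono_AE:
  assumes "integrable M g" "f \<in> borel_measurable M" "AE x in M. \<bar>f x\<bar> \<le> \<bar>g x\<bar>"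
  shows "l1_norm M f \<le> l1_norm M g"
proof -
  have "integrable M f"
    by (rule Bochner_Integration.integrable_bound[OF assms(1) assms(2)]) (use assms(3) in simp)
  then show ?thesis
    unfolding l1_norm_def by (intro integral_mono_AE) (use assms in auto)
qed

lemma integral_le_l1_norm: "(\<integral>x. f x \<partial>M) \<le> l1_norm M f"
  unfolding l1_norm_def using integral_abs_bound[of M f] by linarith

lemma abs_integral_le_l1_norm: "\<bar>\<integral>x. f x \<partial>M\<bar> \<le> l1_norm M f"
  unfolding l1_norm_def using integral_abs_bound[of M f] by simp

lemma l1_norm_eq_integral:
  assumes "integrable M f" "AE x in M. 0 \<le> f x"
  shows "l1_norm M f = (\<integral>x. f x \<partial>M)"
  unfolding l1_norm_def by (rule integral_cong_AE) (use assms in \<open>auto elim: eventually_mono\<close>)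

lemma l1_limit_unique:
  assumes "\<And>n. integrable M (u n)" "integrable M a" "integrable M b"
    "(\<lambda>n. l1_dist M (u n) a) \<longlonglongrightarrow> 0" "(\<lambda>n. l1_dist M (u n) b) \<longlonglongrightarrow> 0"
  shows "AE x in M. a x = b x"
proof -
  have le: "l1_dist M a b \<le> l1_dist M (u n) a + l1_dist M (u n) b" for n
    using l1_dist_triangle[of M a "u n" b] assms l1_dist_commute[of M a "u n"] by auto
  have "(\<lambda>n. l1_dist M (u n) a + l1_dist M (u n) b) \<longlonglongrightarrow> 0"
    using tendsto_add[OF assms(4,5)] by simp
  then have "l1_dist M a b \<le> 0"
    using le by (intro LIMSEQ_le_const[of _ 0]) (auto intro: exI[of _ 0])
  then have "l1_dist M a b = 0" using l1_dist_nonneg[of M a b] by linarith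
  then show ?thesis using l1_dist_eq_0_iff assms by blast
qed

lemma l1_tendsto_integral:
  assumes "\<And>n. integrable M (u n)" "integrable M g" "(\<lambda>n. l1_dist M (u n) g) \<longlonglongrightarrow> 0"
  shows "(\<lambda>n. \<integral>x. u n x \<partial>M) \<longlonglongrightarrow> (\<integral>x. g x \<partial>M)"
proof -
  have le: "dist (\<integral>x. u n x \<partial>M) (\<integral>x. g x \<partial>M) \<le> l1_dist M (u n) g" for n
    using abs_integral_le_l1_norm[of M "\<lambda>x. u n x - g x"]
      Bochner_Integration.integral_diff[OF assms(1,2), of n]
    by (simp add: l1_dist_eq_l1_norm dist_real_def)
  have "(\<lambda>n. dist (\<integral>x. u n x \<partial>M) (\<integral>x. g x \<partial>M)) \<longlonglongrightarrow> 0"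
    by (rule tendsto_sandwich[OF _ _ tendsto_const assms(3)]) (use le in auto)
  then show ?thesis
    by (rule tendsto_dist_iff[THEN iffD2])
qed

lemma l1_tendsto_cong_AE:
  assumes "\<And>n. integrable M (a n)" "\<And>n. integrable M (b n)" "integrable M c"
    "\<And>n. AE x in M. a n x = b n x" "(\<lambda>n. l1_dist M (a n) c) \<longlonglongrightarrow> 0"
  shows "(\<lambda>n. l1_dist M (b n) c) \<longlonglongrightarrow> 0"
proof -
  have "l1_dist M (a n) c = l1_dist M (b n) c" for n
    by (rule l1_dist_cong_AE) (use assms in auto)
  then show ?thesis using assms(5) by simp
qed

lemma l1_tendsto_lincomb:
  assumes "\<And>n. integrable M (a n)" "\<And>n. integrable M (b n)" "integrable M a0" "integrable M b0"
    "(\<lambda>n. l1_dist M (a n) a0) \<longlonglongrightarrow> 0" "(\<lambda>n. l1_dist M (b n) b0) \<longlonglongrightarrow> 0"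
  shows "(\<lambda>n. l1_dist M (\<lambda>x. \<alpha> * a n x + \<beta> * b n x) (\<lambda>x. \<alpha> * a0 x + \<beta> * b0 x)) \<longlonglongrightarrow> 0"
proof -
  have le: "l1_dist M (\<lambda>x. \<alpha> * a n x + \<beta> * b n x) (\<lambda>x. \<alpha> * a0 x + \<beta> * b0 x)
      \<le> \<bar>\<alpha>\<bar> * l1_dist M (a n) a0 + \<bar>\<beta>\<bar> * l1_dist M (b n) b0" for n
  proof -
    have "l1_dist M (\<lambda>x. \<alpha> * a n x + \<beta> * b n x) (\<lambda>x. \<alpha> * a0 x + \<beta> * b0 x)
        = l1_norm M (\<lambda>x. \<alpha> * (a n x - a0 x) + \<beta> * (b n x - b0 x))"
      by (simp add: l1_dist_eq_l1_norm algebra_simps)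
    also have "\<dots> \<le> l1_norm M (\<lambda>x. \<alpha> * (a n x - a0 x)) + l1_norm M (\<lambda>x. \<beta> * (b n x - b0 x))"
      by (rule l1_norm_triangle) (use assms in auto)
    also have "\<dots> = \<bar>\<alpha>\<bar> * l1_dist M (a n) a0 + \<bar>\<beta>\<bar> * l1_dist M (b n) b0"
      by (simp add: l1_norm_cmult l1_dist_eq_l1_norm)
    finally show ?thesis .
  qed
  have "(\<lambda>n. \<bar>\<alpha>\<bar> * l1_dist M (a n) a0 + \<bar>\<beta>\<bar> * l1_dist M (b n) b0) \<longlonglongrightarrow> \<bar>\<alpha>\<bar> * 0 + \<bar>\<beta>\<bar> * 0"
    by (intro tendsto_intros assms)
  then have T: "(\<lambda>n. \<bar>\<alpha>\<bar> * l1_dist M (a n) a0 + \<bar>\<beta>\<bar> * l1_dist M (b n) b0) \<longlonglongrightarrow> 0"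
    by simp
  show ?thesis
    by (rule tendsto_sandwich[OF _ _ tendsto_const T]) (use le in \<open>auto simp: l1_dist_nonneg\<close>)
qed

lemma AE_le_l1_limit:
  assumes F: "F \<noteq> bot" and a: "integrable M a" and c: "integrable M c"
    and ev: "eventually (\<lambda>l. integrable M (b l) \<and> (AE x in M. a x \<le> b l x)) F"
    and lim: "((\<lambda>l. l1_dist M (b l) c) \<longlongrightarrow> 0) F"
  shows "AE x in M. a x \<le> c x"
proof -
  define w where "w = (\<lambda>x. max (a x - c x) 0)"
  have iw: "integrable M w" unfolding w_def using a c by auto
  have "eventually (\<lambda>l. (\<integral>x. w x \<partial>M) \<le> l1_dist M (b l) c) F"
    using ev
  proof eventually_elim
    case (elim l)
    show ?case unfolding l1_dist_def
      by (rule integral_mono_AE) (use elim iw c in \<open>auto simp: w_def elim!: eventually_mono\<close>)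
  qed
  then have "(\<integral>x. w x \<partial>M) \<le> 0" using tendsto_lowerbound[OF lim _ F] by simp
  moreover have "0 \<le> (\<integral>x. w x \<partial>M)" by (simp add: w_def)
  ultimately have "(\<integral>x. w x \<partial>M) = 0" by simp
  then have "AE x in M. w x = 0" using integral_nonneg_eq_0_iff_AE[OF iw] by (simp add: w_def)
  then show ?thesis by eventually_elim (simp add: w_def)
qed

lemma AE_summable_of_l1_summable:
  assumes int: "\<And>i. integrable M (u i)" and sm: "summable (\<lambda>i. l1_norm M (u i))"
  shows "AE x in M. summable (\<lambda>i. \<bar>u i x\<bar>)"
proof -
  have [measurable]: "u i \<in> borel_measurable M" for i using int by auto
  have "(\<integral>\<^sup>+x. (\<Sum>i. ennreal \<bar>u i x\<bar>) \<partial>M) = (\<Sum>i. \<integral>\<^sup>+x. ennreal \<bar>u i x\<bar> \<partial>M)"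
    by (intro nn_integral_suminf) auto
  also have "\<dots> = (\<Sum>i. ennreal (l1_norm M (u i)))"
    unfolding l1_norm_def
    by (intro arg_cong[where f=suminf] ext nn_integral_eq_integral) (auto intro: int)
  also have "\<dots> < \<infinity>"
    using sm by (simp add: ennreal_suminf_neq_top l1_norm_nonneg less_top[symmetric])
  finally have "AE x in M. (\<Sum>i. ennreal \<bar>u i x\<bar>) < \<infinity>"
    by (intro finite_nn_integral_imp_ae_finite) auto
  then show ?thesis
    by eventually_elim (intro summable_suminf_not_top, auto)
qed

lemma l1_norm_suminf_le:
  assumes int: "\<And>i. integrable M (u i)" and sm: "summable (\<lambda>i. l1_norm M (u i))"
  shows "l1_norm M (\<lambda>x. \<Sum>i. u i x) \<le> (\<Sum>i. l1_norm M (u i))"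
proof -
  note AEs = AE_summable_of_l1_summable[OF int sm]
  have "l1_norm M (\<lambda>x. \<Sum>i. u i x) \<le> (\<integral>x. (\<Sum>i. \<bar>u i x\<bar>) \<partial>M)"
    unfolding l1_norm_def
  proof (rule integral_mono_AE)
    show "AE x in M. \<bar>\<Sum>i. u i x\<bar> \<le> (\<Sum>i. \<bar>u i x\<bar>)"
      using AEs by eventually_elim (rule summable_rabs)
    show "integrable M (\<lambda>x. \<Sum>i. \<bar>u i x\<bar>)" "integrable M (\<lambda>x. \<bar>\<Sum>i. u i x\<bar>)"
      by (intro integrable_abs integrable_suminf; use int AEs sm in \<open>auto simp: l1_norm_def\<close>)+
  qed
  also have "\<dots> = (\<Sum>i. l1_norm M (u i))"
    by (subst integral_suminf) (use int AEs sm in \<open>auto simp: l1_norm_def\<close>)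
  finally show ?thesis .
qed

lemma l1_series_convergent:
  assumes int: "\<And>i. integrable M (u i)" and sm: "summable (\<lambda>i. l1_norm M (u i))"
  shows "integrable M (\<lambda>x. \<Sum>i. u i x)"
    and "AE x in M. summable (\<lambda>i. \<bar>u i x\<bar>)"
    and "l1_norm M (\<lambda>x. \<Sum>i. u i x) \<le> (\<Sum>i. l1_norm M (u i))"
    and "(\<lambda>n. l1_dist M (\<lambda>x. \<Sum>i<n. u i x) (\<lambda>x. \<Sum>i. u i x)) \<longlonglongrightarrow> 0"
proof -
  have [measurable]: "u i \<in> borel_measurable M" for i using int by auto
  show AEs: "AE x in M. summable (\<lambda>i. \<bar>u i x\<bar>)"
    by (rule AE_summable_of_l1_summable[OF int sm])
  show int_sum: "integrable M (\<lambda>x. \<Sum>i. u i x)"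
    by (rule integrable_suminf) (use int AEs sm in \<open>auto simp: l1_norm_def\<close>)
  show "l1_norm M (\<lambda>x. \<Sum>i. u i x) \<le> (\<Sum>i. l1_norm M (u i))"
    by (rule l1_norm_suminf_le[OF int sm])
  have tail: "l1_dist M (\<lambda>x. \<Sum>i<n. u i x) (\<lambda>x. \<Sum>i. u i x) \<le> (\<Sum>i. l1_norm M (u (i + n)))" for n
  proof -
    have "AE x in M. (\<Sum>i<n. u i x) - (\<Sum>i. u i x) = - (\<Sum>i. u (i + n) x)"
      using AEs
    proof eventually_elim
      case (elim x)
      then have "summable (\<lambda>i. u i x)" by (rule summable_rabs_cancel)
      from suminf_split_initial_segment[OF this, of n] show ?case by simp
    qed
    then have "l1_dist M (\<lambda>x. \<Sum>i<n. u i x) (\<lambda>x. \<Sum>i. u i x) = l1_norm M (\<lambda>x. - (\<Sum>i. u (i + n) x))"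
      unfolding l1_dist_eq_l1_norm by (intro l1_norm_cong_AE) measurable
    also have "\<dots> \<le> (\<Sum>i. l1_norm M (u (i + n)))"
      unfolding l1_norm_minus
      by (rule l1_norm_suminf_le)
         (use int summable_iff_shift[of "\<lambda>i. l1_norm M (u i)" n] sm in auto)
    finally show ?thesis .
  qed
  have "(\<lambda>n. (\<Sum>i. l1_norm M (u i)) - (\<Sum>i<n. l1_norm M (u i)))
      \<longlonglongrightarrow> (\<Sum>i. l1_norm M (u i)) - (\<Sum>i. l1_norm M (u i))"
    by (intro tendsto_diff tendsto_const summable_LIMSEQ sm)
  moreover have "(\<Sum>i. l1_norm M (u i)) - (\<Sum>i<n. l1_norm M (u i)) = (\<Sum>i. l1_norm M (u (i + n)))" for n
    using suminf_split_initial_segment[OF sm, of n] by simp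
  ultimately have T: "(\<lambda>n. \<Sum>i. l1_norm M (u (i + n))) \<longlonglongrightarrow> 0" by simp
  show "(\<lambda>n. l1_dist M (\<lambda>x. \<Sum>i<n. u i x) (\<lambda>x. \<Sum>i. u i x)) \<longlonglongrightarrow> 0"
    by (rule tendsto_sandwich[OF _ _ tendsto_const T]) (use tail in \<open>auto simp: l1_dist_nonneg\<close>)
qed

lemma l1_Cauchy_subseq_convergent:
  assumes int: "\<And>n. integrable M (s n)" "integrable M g"
    and Cauchy: "\<And>e. e > 0 \<Longrightarrow> \<exists>N. \<forall>m\<ge>N. \<forall>n\<ge>N. l1_dist M (s m) (s n) < e"
    and r: "\<And>k. k \<le> r k" and sub: "(\<lambda>n. l1_dist M (s (r n)) g) \<longlonglongrightarrow> 0"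
  shows "(\<lambda>n. l1_dist M (s n) g) \<longlonglongrightarrow> 0"
proof (rule LIMSEQ_I)
  fix e :: real assume "0 < e"
  obtain K1 where K1: "\<forall>m\<ge>K1. \<forall>n\<ge>K1. l1_dist M (s m) (s n) < e/2"
    using Cauchy[of "e/2"] \<open>0 < e\<close> by auto
  obtain K2 where K2: "\<forall>n\<ge>K2. norm (l1_dist M (s (r n)) g) < e/2"
    using LIMSEQ_D[OF sub, of "e/2"] \<open>0 < e\<close> by auto
  define k where "k = max K1 K2"
  have rk: "K1 \<le> r k" using r[of k] unfolding k_def by linarith
  show "\<exists>no. \<forall>n\<ge>no. norm (l1_dist M (s n) g - 0) < e"
  proof (intro exI allI impI)
    fix n assume "K1 \<le> n"
    have "l1_dist M (s n) g \<le> l1_dist M (s n) (s (r k)) + l1_dist M (s (r k)) g"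
      by (rule l1_dist_triangle) (use int in auto)
    also have "\<dots> < e/2 + e/2"
      using K1 rk \<open>K1 \<le> n\<close> K2[rule_format, of k] by (intro add_strict_mono) (auto simp: k_def)
    finally show "norm (l1_dist M (s n) g - 0) < e" using l1_dist_nonneg[of M "s n" g] by simp
  qed
qed

lemma l1_Cauchy_convergent:
  assumes int: "\<And>n. integrable M (s n)"
    and Cauchy: "\<And>e. e > 0 \<Longrightarrow> \<exists>N. \<forall>m\<ge>N. \<forall>n\<ge>N. l1_dist M (s m) (s n) < e"
  shows "\<exists>g. integrable M g \<and> (\<lambda>n. l1_dist M (s n) g) \<longlonglongrightarrow> 0"
proof -
  define N where "N k = (SOME N. \<forall>m\<ge>N. \<forall>n\<ge>N. l1_dist M (s m) (s n) < (1/2)^k)" for k :: nat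
  have N: "\<forall>m\<ge>N k. \<forall>n\<ge>N k. l1_dist M (s m) (s n) < (1/2)^k" for k
    unfolding N_def by (rule someI_ex) (rule Cauchy, simp)
  \<comment> \<open>A subsequence along which consecutive distances are bounded by a geometric series.\<close>
  define r where "r k = (\<Sum>j\<le>k. N j) + k" for k
  have rN: "N k \<le> r k" for k
    unfolding r_def using member_le_sum[of k "{..k}" N] by auto
  have r_mono: "r k \<le> r (Suc k)" for k
    unfolding r_def by simp
  define u where "u k = (if k = 0 then s (r 0) else (\<lambda>x. s (r k) x - s (r (k - 1)) x))" for k
  have int_u: "integrable M (u k)" for k
    unfolding u_def using int by auto
  have telescope: "(\<Sum>i<Suc n. u i x) = s (r n) x" for n x
    by (induction n) (auto simp: u_def)
  have bound: "l1_norm M (u (Suc k)) \<le> (1/2)^k" for k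
  proof -
    have "l1_norm M (u (Suc k)) = l1_dist M (s (r (Suc k))) (s (r k))"
      by (simp add: u_def l1_dist_eq_l1_norm)
    also have "\<dots> < (1/2)^k" using N[of k] rN[of k] rN[of "Suc k"] r_mono[of k] by auto
    finally show ?thesis by simp
  qed
  have "summable (\<lambda>k. l1_norm M (u (Suc k)))"
    by (rule summable_comparison_test[of _ "\<lambda>k. (1/2)^k"]) (use bound in \<open>auto simp: l1_norm_nonneg\<close>)
  then have sm: "summable (\<lambda>i. l1_norm M (u i))"
    by (subst summable_Suc_iff[symmetric])
  define g where "g = (\<lambda>x. \<Sum>i. u i x)"
  note series = l1_series_convergent[OF int_u sm]
  have int_g: "integrable M g" using series(1) by (simp add: g_def)
  have "(\<lambda>n. l1_dist M (\<lambda>x. \<Sum>i<Suc n. u i x) g) \<longlonglongrightarrow> 0"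
    using LIMSEQ_Suc[OF series(4)] by (simp add: g_def)
  then have sub: "(\<lambda>n. l1_dist M (s (r n)) g) \<longlonglongrightarrow> 0"
    unfolding telescope .
  have "k \<le> r k" for k
    unfolding r_def by simp
  from l1_Cauchy_subseq_convergent[OF int int_g Cauchy this sub]
  have "(\<lambda>n. l1_dist M (s n) g) \<longlonglongrightarrow> 0" .
  with int_g show ?thesis by blast
qed

lemma l1_convergent_decseq:
  assumes int: "\<And>n. integrable M (u n)" and nonneg: "\<And>n. AE x in M. 0 \<le> u n x"
    and dec: "\<And>n. AE x in M. u (Suc n) x \<le> u n x"
  shows "\<exists>g. integrable M g \<and> (\<lambda>n. l1_dist M (u n) g) \<longlonglongrightarrow> 0"
proof (rule l1_Cauchy_convergent[OF int])
  define a where "a n = (\<integral>x. u n x \<partial>M)" for n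
  have dec': "AE x in M. u m x \<le> u n x" if "n \<le> m" for n m
    using that
  proof (induction rule: dec_induct)
    case (step m)
    from this(3) dec[of m] show ?case by eventually_elim simp
  qed simp
  have dist: "l1_dist M (u m) (u n) = \<bar>a m - a n\<bar>" if "n \<le> m" for n m
  proof -
    have "l1_dist M (u m) (u n) = (\<integral>x. u n x - u m x \<partial>M)"
      unfolding l1_dist_def
      by (rule integral_cong_AE) (use dec'[OF that] int in \<open>auto elim!: eventually_mono\<close>)
    also have "\<dots> = a n - a m"
      unfolding a_def by (rule Bochner_Integration.integral_diff[OF int int])
    finally show ?thesis
      using integral_mono_AE[OF int int dec'[OF that]] by (simp add: a_def)
  qed
  have a_dec: "a m \<le> a n" if "n \<le> m" for n m
    unfolding a_def by (rule integral_mono_AE[OF int int dec'[OF that]])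
  have a_nonneg: "0 \<le> a n" for n
    unfolding a_def by (rule integral_nonneg_AE[OF nonneg])
  have "Bseq a"
    by (rule BseqI'[of _ "a 0"]) (use a_nonneg a_dec[of 0] in auto)
  moreover have "monoseq a"
    unfolding monoseq_def using a_dec by blast
  ultimately have "Cauchy a"
    using Bseq_monoseq_convergent convergent_Cauchy by blast
  fix e :: real assume "0 < e"
  with \<open>Cauchy a\<close> obtain N where N: "\<forall>m\<ge>N. \<forall>n\<ge>N. dist (a m) (a n) < e"
    unfolding Cauchy_def by blast
  show "\<exists>N. \<forall>m\<ge>N. \<forall>n\<ge>N. l1_dist M (u m) (u n) < e"
  proof (intro exI[of _ N] allI impI)
    fix m n assume mn: "N \<le> m" "N \<le> n"
    have "l1_dist M (u m) (u n) = \<bar>a m - a n\<bar>"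
    proof (cases "n \<le> m")
      case False
      then show ?thesis
        using dist[of m n] l1_dist_commute[of M "u m" "u n"] by (simp add: abs_minus_commute)
    qed (rule dist)
    then show "l1_dist M (u m) (u n) < e"
      using N mn by (simp add: dist_real_def)
  qed
qed

section \<open>Positive contractions on $L^1$\<close>

lemma l1_linear_integrable: "l1_linear M T \<Longrightarrow> integrable M f \<Longrightarrow> integrable M (T f)"
  by (simp add: l1_linear_def l1_def)

lemma l1_linear_cong_AE:
  "l1_linear M T \<Longrightarrow> integrable M f \<Longrightarrow> integrable M g \<Longrightarrow> AE x in M. f x = g x
    \<Longrightarrow> AE x in M. T f x = T g x"
  by (simp add: l1_linear_def l1_def)

lemma l1_linear_lincomb:
  "l1_linear M T \<Longrightarrow> integrable M f \<Longrightarrow> integrable M g \<Longrightarrow>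
    AE x in M. T (\<lambda>y. a * f y + b * g y) x = a * T f x + b * T g x"
  by (simp add: l1_linear_def l1_def)

lemma l1_linear_add:
  assumes "l1_linear M T" "integrable M f" "integrable M g"
  shows "AE x in M. T (\<lambda>y. f y + g y) x = T f x + T g x"
  using l1_linear_lincomb[OF assms, of 1 1] by simp

lemma l1_linear_diff:
  assumes "l1_linear M T" "integrable M f" "integrable M g"
  shows "AE x in M. T (\<lambda>y. f y - g y) x = T f x - T g x"
  using l1_linear_lincomb[OF assms, of 1 "-1"] by simp

lemma l1_linear_cmult:
  assumes "l1_linear M T" "integrable M f"
  shows "AE x in M. T (\<lambda>y. c * f y) x = c * T f x"
  using l1_linear_lincomb[OF assms assms(2), of c 0] by simp

lemma l1_linear_zero:
  assumes "l1_linear M T"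
  shows "AE x in M. T (\<lambda>y. 0) x = 0"
  using l1_linear_cmult[OF assms, of "\<lambda>y. 0" 0] by simp

lemma l1_linear_sum:
  assumes "l1_linear M T" "finite I" "\<And>i. i \<in> I \<Longrightarrow> integrable M (f i)"
  shows "AE x in M. T (\<lambda>y. \<Sum>i\<in>I. f i y) x = (\<Sum>i\<in>I. T (f i) x)"
  using assms(2,3)
proof (induction I rule: finite_induct)
  case empty
  then show ?case using l1_linear_zero[OF assms(1)] by simp
next
  case (insert a I)
  have "AE x in M. T (\<lambda>y. f a y + (\<Sum>i\<in>I. f i y)) x = T (f a) x + T (\<lambda>y. \<Sum>i\<in>I. f i y) x"
    by (rule l1_linear_add[OF assms(1)]) (use insert in auto)
  with insert.IH insert.prems show ?case
    by (auto simp: insert.hyps elim!: eventually_elim2)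
qed

lemma l1_linear_id: "l1_linear M (\<lambda>f. f)"
  by (simp add: l1_linear_def l1_def)

lemma l1_linear_compose:
  assumes T: "l1_linear M T" and U: "l1_linear M U"
  shows "l1_linear M (\<lambda>f. T (U f))"
  unfolding l1_linear_def l1_def
proof (intro conjI allI impI)
  fix f :: "'a \<Rightarrow> real" assume "integrable M f"
  then show "integrable M (T (U f))" using l1_linear_integrable T U by blast
next
  fix f g :: "'a \<Rightarrow> real" assume fg: "integrable M f \<and> integrable M g \<and> (AE x in M. f x = g x)"
  then have "AE x in M. U f x = U g x" using l1_linear_cong_AE[OF U] by blast
  then show "AE x in M. T (U f) x = T (U g) x"
    using l1_linear_cong_AE[OF T] l1_linear_integrable[OF U] fg by blast
next
  fix a b :: real and f g :: "'a \<Rightarrow> real" assume fg: "integrable M f \<and> integrable M g"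
  have "AE x in M. U (\<lambda>y. a * f y + b * g y) x = a * U f x + b * U g x"
    using l1_linear_lincomb[OF U] fg by blast
  then have "AE x in M. T (U (\<lambda>y. a * f y + b * g y)) x = T (\<lambda>y. a * U f y + b * U g y) x"
    by (rule l1_linear_cong_AE[OF T, rotated 2]) (use fg l1_linear_integrable[OF U] in auto)
  moreover have "AE x in M. T (\<lambda>y. a * U f y + b * U g y) x = a * T (U f) x + b * T (U g) x"
    by (rule l1_linear_lincomb[OF T]) (use fg l1_linear_integrable[OF U] in auto)
  ultimately show "AE x in M. T (U (\<lambda>y. a * f y + b * g y)) x = a * T (U f) x + b * T (U g) x"
    by eventually_elim simp
qed

lemma substochastic_l1_linear: "substochastic M T \<Longrightarrow> l1_linear M T"
  by (simp add: substochastic_def)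

lemma substochastic_integrable: "substochastic M T \<Longrightarrow> integrable M f \<Longrightarrow> integrable M (T f)"
  using substochastic_l1_linear l1_linear_integrable by blast

lemma substochastic_nonneg:
  "substochastic M T \<Longrightarrow> integrable M f \<Longrightarrow> AE x in M. 0 \<le> f x \<Longrightarrow> AE x in M. 0 \<le> T f x"
  by (simp add: substochastic_def l1_def)

lemma substochastic_l1_norm_le:
  "substochastic M T \<Longrightarrow> integrable M f \<Longrightarrow> l1_norm M (T f) \<le> l1_norm M f"
  by (simp add: substochastic_def l1_norm_def l1_def)

lemma substochastic_l1_dist_le:
  assumes T: "substochastic M T" and "integrable M f" "integrable M g"
  shows "l1_dist M (T f) (T g) \<le> l1_dist M f g"
proof -
  have L: "l1_linear M T" using T by (rule substochastic_l1_linear)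
  have "l1_dist M (T f) (T g) = l1_norm M (T (\<lambda>y. f y - g y))"
    unfolding l1_dist_eq_l1_norm
  proof (rule l1_norm_cong_AE)
    show "AE x in M. T f x - T g x = T (\<lambda>y. f y - g y) x"
      using l1_linear_diff[OF L assms(2,3)] by (auto elim: eventually_mono)
  qed (use l1_linear_integrable[OF L] assms in auto)
  also have "\<dots> \<le> l1_dist M f g"
    unfolding l1_dist_eq_l1_norm by (rule substochastic_l1_norm_le[OF T]) (use assms in auto)
  finally show ?thesis .
qed

lemma substochastic_integral_le:
  assumes "substochastic M T" "integrable M f" "AE x in M. 0 \<le> f x"
  shows "(\<integral>x. T f x \<partial>M) \<le> (\<integral>x. f x \<partial>M)"
  using integral_le_l1_norm[of M "T f"] substochastic_l1_norm_le[OF assms(1,2)]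
    l1_norm_eq_integral[OF assms(2,3)] by linarith

lemma substochastic_mono:
  assumes T: "substochastic M T" and "integrable M u" "integrable M v" "AE x in M. u x \<le> v x"
  shows "AE x in M. T u x \<le> T v x"
proof -
  have "AE x in M. 0 \<le> T (\<lambda>y. v y - u y) x"
    by (rule substochastic_nonneg[OF T]) (use assms in \<open>auto elim: eventually_mono\<close>)
  with l1_linear_diff[OF substochastic_l1_linear[OF T] assms(3,2)] show ?thesis
    by eventually_elim simp
qed

text \<open>For positive operators, contractivity only needs to be checked on the positive cone,
  where the norm is the integral.\<close>

lemma substochasticI:
  assumes L: "l1_linear M T"
    and nonneg: "\<And>f. integrable M f \<Longrightarrow> AE x in M. 0 \<le> f x \<Longrightarrow> AE x in M. 0 \<le> T f x"
    and integral_le: "\<And>f. integrable M f \<Longrightarrow> AE x in M. 0 \<le> f x \<Longrightarrow> (\<integral>x. T f x \<partial>M) \<le> (\<integral>x. f x \<partial>M)"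
  shows "substochastic M T"
proof -
  have "l1_norm M (T f) \<le> l1_norm M f" if f: "integrable M f" for f
  proof -
    define fp where "fp = (\<lambda>x. max (f x) 0)"
    define fn where "fn = (\<lambda>x. max (- f x) 0)"
    have i: "integrable M fp" "integrable M fn" unfolding fp_def fn_def using f by auto
    have nn: "AE x in M. 0 \<le> fp x" "AE x in M. 0 \<le> fn x" by (auto simp: fp_def fn_def)
    have "f = (\<lambda>x. fp x - fn x)" unfolding fp_def fn_def by (auto simp: max_def)
    then have "AE x in M. T f x = T fp x - T fn x"
      using l1_linear_diff[OF L i] by simp
    with nonneg[OF i(1) nn(1)] nonneg[OF i(2) nn(2)]
    have "AE x in M. \<bar>T f x\<bar> \<le> T fp x + T fn x"
      by eventually_elim auto
    then have "l1_norm M (T f) \<le> (\<integral>x. T fp x + T fn x \<partial>M)"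
      unfolding l1_norm_def
      by (intro integral_mono_AE) (use l1_linear_integrable[OF L] i f in auto)
    also have "\<dots> = (\<integral>x. T fp x \<partial>M) + (\<integral>x. T fn x \<partial>M)"
      by (rule Bochner_Integration.integral_add) (use l1_linear_integrable[OF L] i in auto)
    also have "\<dots> \<le> (\<integral>x. fp x \<partial>M) + (\<integral>x. fn x \<partial>M)"
      using integral_le[OF i(1) nn(1)] integral_le[OF i(2) nn(2)] by simp
    also have "\<dots> = (\<integral>x. fp x + fn x \<partial>M)"
      by (rule Bochner_Integration.integral_add[OF i, symmetric])
    also have "(\<lambda>x. fp x + fn x) = (\<lambda>x. \<bar>f x\<bar>)"
      by (auto simp: fp_def fn_def max_def)
    finally show ?thesis by (simp add: l1_norm_def)
  qed
  then show ?thesis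
    using L nonneg by (simp add: substochastic_def l1_def l1_norm_def)
qed

lemma substochastic_id: "substochastic M (\<lambda>f. f)"
  by (rule substochasticI[OF l1_linear_id]) auto

lemma substochastic_compose:
  assumes T: "substochastic M T" and U: "substochastic M U"
  shows "substochastic M (\<lambda>f. T (U f))"
proof (rule substochasticI)
  show "l1_linear M (\<lambda>f. T (U f))"
    using l1_linear_compose substochastic_l1_linear T U by blast
  fix f :: "'a \<Rightarrow> real" assume f: "integrable M f" "AE x in M. 0 \<le> f x"
  then have Uf: "integrable M (U f)" "AE x in M. 0 \<le> U f x"
    using substochastic_integrable[OF U] substochastic_nonneg[OF U] by auto
  then show "AE x in M. 0 \<le> T (U f) x"
    by (rule substochastic_nonneg[OF T])
  show "(\<integral>x. T (U f) x \<partial>M) \<le> (\<integral>x. f x \<partial>M)"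
    using substochastic_integral_le[OF T Uf] substochastic_integral_le[OF U f] by linarith
qed

lemma substochastic_funpow: "substochastic M T \<Longrightarrow> substochastic M (T ^^ n)"
proof (induction n)
  case 0
  then show ?case by (simp add: substochastic_id id_def)
next
  case (Suc n)
  then show ?case
    using substochastic_compose[OF Suc.prems Suc.IH[OF Suc.prems]] by (simp add: comp_def)
qed

lemma l1_tendsto_substochastic:
  assumes T: "substochastic M T" and "\<And>n. integrable M (a n)" "integrable M a0"
    "(\<lambda>n. l1_dist M (a n) a0) \<longlonglongrightarrow> 0"
  shows "(\<lambda>n. l1_dist M (T (a n)) (T a0)) \<longlonglongrightarrow> 0"
  by (rule tendsto_sandwich[OF _ _ tendsto_const assms(4)])
     (use substochastic_l1_dist_le[OF T assms(2,3)] in \<open>auto simp: l1_dist_nonneg\<close>)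

lemma stochastic_preserves_integral:
  assumes P: "stochastic M P" and f: "integrable M f" "AE x in M. 0 \<le> f x"
  shows "AE x in M. 0 \<le> P f x" "(\<integral>x. P f x \<partial>M) = (\<integral>x. f x \<partial>M)"
proof -
  have L: "l1_linear M P" using P by (simp add: stochastic_def)
  define c where "c = (\<integral>x. f x \<partial>M)"
  have "0 \<le> c" unfolding c_def using f by (simp add: integral_nonneg_AE)
  then consider "c = 0" | "0 < c" by linarith
  then have "(AE x in M. 0 \<le> P f x) \<and> (\<integral>x. P f x \<partial>M) = c"
  proof cases
    case 1
    then have "AE x in M. f x = 0"
      using integral_nonneg_eq_0_iff_AE[OF f] by (simp add: c_def)
    then have "AE x in M. P f x = P (\<lambda>y. 0) x"
      by (rule l1_linear_cong_AE[OF L f(1), rotated]) simp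
    with l1_linear_zero[OF L] have "AE x in M. P f x = 0"
      by eventually_elim simp
    with 1 show ?thesis
      by (auto simp: integral_eq_zero_AE elim: eventually_mono)
  next
    case 2
    define u where "u = (\<lambda>x. (1/c) * f x)"
    have "is_density M u"
      unfolding is_density_def l1_def u_def using f 2 by (auto simp: c_def elim: eventually_mono)
    then have Pu: "is_density M (P u)" using P by (simp add: stochastic_def)
    have "AE x in M. P u x = (1/c) * P f x"
      unfolding u_def by (rule l1_linear_cmult[OF L f(1)])
    then have e: "AE x in M. P f x = c * P u x"
      by eventually_elim (use 2 in simp)
    have "AE x in M. 0 \<le> P f x"
      using e Pu 2 unfolding is_density_def
      by (auto elim!: eventually_elim2 intro: mult_nonneg_nonneg)
    moreover have "(\<integral>x. P f x \<partial>M) = (\<integral>x. c * P u x \<partial>M)"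
      by (rule integral_cong_AE)
         (use e Pu l1_linear_integrable[OF L f(1)] in \<open>auto simp: is_density_def l1_def\<close>)
    ultimately show ?thesis using Pu by (simp add: is_density_def)
  qed
  then show "AE x in M. 0 \<le> P f x" "(\<integral>x. P f x \<partial>M) = (\<integral>x. f x \<partial>M)"
    by (auto simp: c_def)
qed

lemma stochastic_imp_substochastic:
  assumes "stochastic M P"
  shows "substochastic M P"
  by (rule substochasticI)
     (use assms stochastic_preserves_integral[OF assms] in \<open>auto simp: stochastic_def\<close>)

section \<open>Substochastic semigroups and their generators\<close>

lemma integrable_bounded_mult:
  fixes \<psi> :: "'a \<Rightarrow> real"
  assumes "\<psi> \<in> borel_measurable M" "\<And>x. \<bar>\<psi> x\<bar> \<le> 1" "integrable M w"
  shows "integrable M (\<lambda>x. \<psi> x * w x)"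
  by (rule Bochner_Integration.integrable_bound[OF assms(3)])
     (use assms in \<open>auto simp: abs_mult intro!: AE_I2 mult_left_le_one_le\<close>)

locale substochastic_sg =
  fixes M :: "'a measure" and S :: "real \<Rightarrow> ('a \<Rightarrow> real) \<Rightarrow> ('a \<Rightarrow> real)"
  assumes semigroup: "substochastic_semigroup M S"
begin

lemma substochastic_S: "0 \<le> t \<Longrightarrow> substochastic M (S t)"
  using semigroup by (simp add: substochastic_semigroup_def)

lemma l1_linear_S: "0 \<le> t \<Longrightarrow> l1_linear M (S t)"
  using substochastic_S substochastic_l1_linear by blast

lemma integrable_S: "0 \<le> t \<Longrightarrow> integrable M f \<Longrightarrow> integrable M (S t f)"
  using substochastic_S substochastic_integrable by blast

lemma l1_norm_S_le: "0 \<le> t \<Longrightarrow> integrable M f \<Longrightarrow> l1_norm M (S t f) \<le> l1_norm M f"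
  using substochastic_S substochastic_l1_norm_le by blast

lemma l1_dist_S_le:
  "0 \<le> t \<Longrightarrow> integrable M f \<Longrightarrow> integrable M g \<Longrightarrow> l1_dist M (S t f) (S t g) \<le> l1_dist M f g"
  using substochastic_S substochastic_l1_dist_le by blast

lemma l1_dist_S_le_add:
  assumes "0 \<le> t" "integrable M v" "integrable M g"
  shows "l1_dist M (S t v) g \<le> l1_dist M v g + l1_dist M (S t g) g"
  using l1_dist_triangle[of M "S t v" "S t g" g] l1_dist_S_le[OF assms] integrable_S assms by force

lemma S_nonneg:
  "0 \<le> t \<Longrightarrow> integrable M f \<Longrightarrow> AE x in M. 0 \<le> f x \<Longrightarrow> AE x in M. 0 \<le> S t f x"
  using substochastic_S substochastic_nonneg by blast

lemma S_diff:
  "0 \<le> t \<Longrightarrow> integrable M f \<Longrightarrow> integrable M g \<Longrightarrow>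
    AE x in M. S t (\<lambda>y. f y - g y) x = S t f x - S t g x"
  using l1_linear_S l1_linear_diff by blast

lemma S_0: "integrable M f \<Longrightarrow> AE x in M. S 0 f x = f x"
  using semigroup by (simp add: substochastic_semigroup_def c0_semigroup_def l1_def)

lemma S_add:
  "0 \<le> s \<Longrightarrow> 0 \<le> t \<Longrightarrow> integrable M f \<Longrightarrow> AE x in M. S (s + t) f x = S s (S t f) x"
  using semigroup by (simp add: substochastic_semigroup_def c0_semigroup_def l1_def)

lemma S_commute:
  assumes "0 \<le> s" "0 \<le> t" "integrable M f"
  shows "AE x in M. S s (S t f) x = S t (S s f) x"
  using S_add[OF assms] S_add[OF assms(2,1,3)] by eventually_elim (simp add: add.commute)

lemma S_strongly_continuous:
  assumes "integrable M f" "0 < e"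
  obtains \<eta> where "0 < \<eta>" "\<And>r. 0 \<le> r \<Longrightarrow> r < \<eta> \<Longrightarrow> l1_dist M (S r f) f < e"
proof -
  have "((\<lambda>t. l1_dist M (S t f) f) \<longlongrightarrow> 0) (at_right 0)"
    using semigroup assms(1) by (simp add: substochastic_semigroup_def c0_semigroup_def l1_def)
  from tendstoD[OF this assms(2)] obtain \<eta> where "0 < \<eta>"
    and less: "\<And>t. 0 < t \<Longrightarrow> t < \<eta> \<Longrightarrow> l1_dist M (S t f) f < e"
    unfolding eventually_at_right_field by (auto simp: l1_dist_nonneg)
  moreover have "l1_dist M (S 0 f) f = 0"
    using S_0[OF assms(1)] l1_dist_eq_0_iff[OF integrable_S[OF order_refl assms(1)] assms(1)] by simp
  ultimately show ?thesis
    using assms(2) that by (metis order_le_less)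
qed

lemma S_telescope:
  assumes "0 \<le> \<delta>" "integrable M u" "integrable M v" "AE x in M. S \<delta> u x = u x + \<delta> * v x"
  shows "AE x in M. S (real k * \<delta>) u x - u x = \<delta> * (\<Sum>i<k. S (real i * \<delta>) v x)"
proof (induction k)
  case 0
  show ?case using S_0[OF assms(2)] by simp
next
  case (Suc k)
  have k: "0 \<le> real k * \<delta>" using assms(1) by simp
  have e1: "AE x in M. S (real k * \<delta> + \<delta>) u x = S (real k * \<delta>) (S \<delta> u) x"
    using S_add[OF k assms(1) assms(2)] .
  have e2: "AE x in M. S (real k * \<delta>) (S \<delta> u) x = S (real k * \<delta>) (\<lambda>y. u y + \<delta> * v y) x"
    by (rule l1_linear_cong_AE[OF l1_linear_S[OF k]]) (use integrable_S assms in auto)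
  have e3: "AE x in M. S (real k * \<delta>) (\<lambda>y. 1 * u y + \<delta> * v y) x
      = 1 * S (real k * \<delta>) u x + \<delta> * S (real k * \<delta>) v x"
    by (rule l1_linear_lincomb[OF l1_linear_S[OF k]]) (use assms in auto)
  have eq: "real (Suc k) * \<delta> = real k * \<delta> + \<delta>"
    by (simp add: algebra_simps)
  from e1 e2 e3 Suc.IH show ?case
    unfolding eq by eventually_elim (simp add: algebra_simps)
qed

lemma generator_integrable:
  "generator M S h k \<Longrightarrow> integrable M h" "generator M S h k \<Longrightarrow> integrable M k"
  by (auto simp: generator_def l1_def)

lemma generator_tendsto:
  "generator M S h k \<Longrightarrow> ((\<lambda>t. l1_dist M (\<lambda>x. (S t h x - h x) / t) k) \<longlongrightarrow> 0) (at_right 0)"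
  by (auto simp: generator_def)

lemma generator_cong_AE:
  assumes g: "generator M S h k" and "integrable M k'" "AE x in M. k x = k' x"
  shows "generator M S h k'"
proof -
  have int: "integrable M h" "integrable M k" using generator_integrable g by auto
  have "eventually (\<lambda>t. l1_dist M (\<lambda>x. (S t h x - h x) / t) k
      = l1_dist M (\<lambda>x. (S t h x - h x) / t) k') (at_right 0)"
    unfolding eventually_at_right_field
  proof (intro exI[of _ 1] conjI allI impI)
    fix t :: real assume t: "0 < t" "t < 1"
    have "(\<lambda>x. (S t h x - h x) / t) \<in> borel_measurable M"
      using integrable_S[of t h] t int by auto
    then have "l1_dist M k (\<lambda>x. (S t h x - h x) / t) = l1_dist M k' (\<lambda>x. (S t h x - h x) / t)"
      by (intro l1_dist_cong_AE) (use int assms in auto)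
    then show "l1_dist M (\<lambda>x. (S t h x - h x) / t) k = l1_dist M (\<lambda>x. (S t h x - h x) / t) k'"
      by (simp add: l1_dist_commute)
  qed simp
  then have "((\<lambda>t. l1_dist M (\<lambda>x. (S t h x - h x) / t) k') \<longlongrightarrow> 0) (at_right 0)"
    using generator_tendsto[OF g] by (rule Lim_transform_eventually[rotated])
  then show ?thesis using assms int unfolding generator_def l1_def by auto
qed

lemma generator_lincomb:
  assumes gu: "generator M S u a" and gv: "generator M S v b"
  shows "generator M S (\<lambda>x. \<alpha> * u x + \<beta> * v x) (\<lambda>x. \<alpha> * a x + \<beta> * b x)"
proof -
  define w where "w = (\<lambda>x. \<alpha> * u x + \<beta> * v x)"
  define c where "c = (\<lambda>x. \<alpha> * a x + \<beta> * b x)"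
  define Du where "Du t = l1_dist M (\<lambda>x. (S t u x - u x) / t) a" for t
  define Dv where "Dv t = l1_dist M (\<lambda>x. (S t v x - v x) / t) b" for t
  have int: "integrable M u" "integrable M a" "integrable M v" "integrable M b"
    using generator_integrable gu gv by auto
  have le: "l1_dist M (\<lambda>x. (S t w x - w x) / t) c \<le> \<bar>\<alpha>\<bar> * Du t + \<bar>\<beta>\<bar> * Dv t"
    if t: "0 < t" for t
  proof -
    have "AE x in M. S t w x = \<alpha> * S t u x + \<beta> * S t v x"
      unfolding w_def using l1_linear_lincomb[OF l1_linear_S int(1) int(3)] t by auto
    then have "AE x in M. (S t w x - w x) / t - c x
        = \<alpha> * ((S t u x - u x) / t - a x) + \<beta> * ((S t v x - v x) / t - b x)"
      by eventually_elim (simp add: w_def c_def diff_divide_distrib add_divide_distrib algebra_simps)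
    then have "l1_dist M (\<lambda>x. (S t w x - w x) / t) c
        = l1_norm M (\<lambda>x. \<alpha> * ((S t u x - u x) / t - a x) + \<beta> * ((S t v x - v x) / t - b x))"
      unfolding l1_dist_eq_l1_norm
      by (intro l1_norm_cong_AE) (use integrable_S[of t] t int in \<open>auto simp: w_def c_def\<close>)
    also have "\<dots> \<le> l1_norm M (\<lambda>x. \<alpha> * ((S t u x - u x) / t - a x))
        + l1_norm M (\<lambda>x. \<beta> * ((S t v x - v x) / t - b x))"
      by (rule l1_norm_triangle) (use integrable_S[of t] t int in auto)
    also have "\<dots> = \<bar>\<alpha>\<bar> * Du t + \<bar>\<beta>\<bar> * Dv t"
      by (simp add: l1_norm_cmult l1_dist_eq_l1_norm Du_def Dv_def)
    finally show ?thesis .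
  qed
  have "((\<lambda>t. \<bar>\<alpha>\<bar> * Du t + \<bar>\<beta>\<bar> * Dv t) \<longlongrightarrow> \<bar>\<alpha>\<bar> * 0 + \<bar>\<beta>\<bar> * 0) (at_right 0)"
    unfolding Du_def Dv_def by (intro tendsto_intros generator_tendsto gu gv)
  then have T: "((\<lambda>t. \<bar>\<alpha>\<bar> * Du t + \<bar>\<beta>\<bar> * Dv t) \<longlongrightarrow> 0) (at_right 0)"
    by simp
  have "((\<lambda>t. l1_dist M (\<lambda>x. (S t w x - w x) / t) c) \<longlongrightarrow> 0) (at_right 0)"
    by (rule tendsto_sandwich[OF _ _ tendsto_const T])
       (use le in \<open>auto simp: eventually_at_right_field l1_dist_nonneg intro!: exI[of _ 1]\<close>)
  then show ?thesis
    using int unfolding generator_def l1_def w_def c_def by auto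
qed

lemma integral_bounded_mult_difference_quotient:
  fixes \<psi> :: "'a \<Rightarrow> real"
  assumes "\<psi> \<in> borel_measurable M" "\<And>x. \<bar>\<psi> x\<bar> \<le> 1" "integrable M h" "0 < t"
  shows "(\<integral>x. \<psi> x * ((S t h x - h x) / t) \<partial>M)
    = ((\<integral>x. \<psi> x * S t h x \<partial>M) - (\<integral>x. \<psi> x * h x \<partial>M)) / t"
proof -
  have "(\<integral>x. \<psi> x * ((S t h x - h x) / t) \<partial>M) = (\<integral>x. (1/t) * (\<psi> x * S t h x - \<psi> x * h x) \<partial>M)"
    by (simp add: algebra_simps diff_divide_distrib)
  also have "\<dots> = (1/t) * (\<integral>x. \<psi> x * S t h x - \<psi> x * h x \<partial>M)"
    by simp
  also have "(\<integral>x. \<psi> x * S t h x - \<psi> x * h x \<partial>M) = (\<integral>x. \<psi> x * S t h x \<partial>M) - (\<integral>x. \<psi> x * h x \<partial>M)"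
    using integrable_S[of t h] assms
    by (intro Bochner_Integration.integral_diff integrable_bounded_mult) auto
  finally show ?thesis by simp
qed

text \<open>Pairing with a bounded function, a sign or an indicator, is how dissipativity and
  positivity are read off from the generator.\<close>

lemma generator_bounded_mult_tendsto:
  assumes g: "generator M S h k" and \<psi>: "\<psi> \<in> borel_measurable M" "\<And>x. \<bar>\<psi> x\<bar> \<le> 1"
  shows "((\<lambda>t. \<integral>x. \<psi> x * ((S t h x - h x) / t) \<partial>M) \<longlongrightarrow> (\<integral>x. \<psi> x * k x \<partial>M)) (at_right 0)"
proof -
  have int: "integrable M h" "integrable M k" using generator_integrable g by auto
  have le: "dist (\<integral>x. \<psi> x * ((S t h x - h x) / t) \<partial>M) (\<integral>x. \<psi> x * k x \<partial>M)
      \<le> l1_dist M (\<lambda>x. (S t h x - h x) / t) k" if t: "0 < t" for t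
  proof -
    have iq: "integrable M (\<lambda>x. (S t h x - h x) / t)" using integrable_S[of t h] t int by auto
    have "(\<integral>x. \<psi> x * ((S t h x - h x) / t) \<partial>M) - (\<integral>x. \<psi> x * k x \<partial>M)
        = (\<integral>x. \<psi> x * ((S t h x - h x) / t) - \<psi> x * k x \<partial>M)"
      by (intro Bochner_Integration.integral_diff[symmetric] integrable_bounded_mult \<psi> iq int)
    also have "\<dots> = (\<integral>x. \<psi> x * ((S t h x - h x) / t - k x) \<partial>M)"
      by (simp add: right_diff_distrib)
    also have "\<bar>\<dots>\<bar> \<le> l1_norm M (\<lambda>x. \<psi> x * ((S t h x - h x) / t - k x))"
      by (rule abs_integral_le_l1_norm)
    also have "\<dots> \<le> l1_dist M (\<lambda>x. (S t h x - h x) / t) k"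
      unfolding l1_dist_eq_l1_norm
      by (rule l1_norm_mono_AE) (use iq int \<psi> in \<open>auto simp: abs_mult intro!: mult_left_le_one_le\<close>)
    finally show ?thesis by (simp add: dist_real_def)
  qed
  show ?thesis
    by (rule tendsto_dist_iff[THEN iffD2], rule tendsto_sandwich[OF _ _ tendsto_const generator_tendsto[OF g]])
       (use le in \<open>auto simp: eventually_at_right_field intro!: exI[of _ 1]\<close>)
qed

lemma generator_eigenvector_eq_0:
  assumes lam: "0 < lam" and g: "generator M S d (\<lambda>x. lam * d x)"
  shows "AE x in M. d x = 0"
proof -
  have int: "integrable M d" using generator_integrable g by auto
  define \<psi> where "\<psi> = (\<lambda>x. sgn (d x))"
  have \<psi>: "\<psi> \<in> borel_measurable M" "\<And>x. \<bar>\<psi> x\<bar> \<le> 1"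
    using int by (auto simp: \<psi>_def abs_sgn_eq)
  have \<psi>_d: "(\<integral>x. \<psi> x * d x \<partial>M) = l1_norm M d"
    unfolding l1_norm_def \<psi>_def by (simp add: abs_sgn mult.commute)
  have "(\<integral>x. \<psi> x * ((S t d x - d x) / t) \<partial>M) \<le> 0" if t: "0 < t" for t
  proof -
    have "(\<integral>x. \<psi> x * S t d x \<partial>M) \<le> l1_norm M (\<lambda>x. \<psi> x * S t d x)"
      by (rule integral_le_l1_norm)
    also have "\<dots> \<le> l1_norm M (S t d)"
      by (rule l1_norm_mono_AE) (use \<psi> integrable_S[of t d] t int in \<open>auto simp: abs_mult intro!: mult_left_le_one_le\<close>)
    also have "\<dots> \<le> l1_norm M d" using l1_norm_S_le t int by auto
    finally show ?thesis
      unfolding integral_bounded_mult_difference_quotient[OF \<psi> int t] \<psi>_d using t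
      by (simp add: divide_nonpos_pos)
  qed
  then have "(\<integral>x. \<psi> x * (lam * d x) \<partial>M) \<le> 0"
    by (intro tendsto_upperbound[OF generator_bounded_mult_tendsto[OF g \<psi>]])
       (auto simp: eventually_at_right_field intro!: exI[of _ 1])
  moreover have "(\<integral>x. \<psi> x * (lam * d x) \<partial>M) = lam * l1_norm M d"
    using \<psi>_d by (simp add: mult.left_commute)
  ultimately have "l1_norm M d \<le> 0" using lam by (simp add: mult_le_0_iff)
  then show ?thesis
    using l1_norm_eq_0_iff[OF int] l1_norm_nonneg[of M d] by simp
qed

lemma generator_resolvent_equation_unique:
  assumes lam: "0 < lam"
    and g1: "generator M S h1 (\<lambda>x. lam * h1 x - f x)" and g2: "generator M S h2 (\<lambda>x. lam * h2 x - f x)"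
  shows "AE x in M. h1 x = h2 x"
proof -
  have int: "integrable M h1" "integrable M h2" using generator_integrable g1 g2 by auto
  have "generator M S (\<lambda>x. 1 * h1 x + (-1) * h2 x) (\<lambda>x. 1 * (lam * h1 x - f x) + (-1) * (lam * h2 x - f x))"
    by (rule generator_lincomb[OF g1 g2])
  then have "generator M S (\<lambda>x. 1 * h1 x + (-1) * h2 x) (\<lambda>x. lam * (1 * h1 x + (-1) * h2 x))"
    by (rule generator_cong_AE) (use int in \<open>auto simp: algebra_simps\<close>)
  from generator_eigenvector_eq_0[OF lam this] show ?thesis by eventually_elim simp
qed

lemma generator_resolvent_equation_nonneg:
  assumes lam: "0 < lam" and f: "integrable M f" "AE x in M. 0 \<le> f x"
    and g: "generator M S h (\<lambda>x. lam * h x - f x)"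
  shows "AE x in M. 0 \<le> h x"
proof -
  have int: "integrable M h" using generator_integrable g by auto
  define \<psi> where "\<psi> = (\<lambda>x. if h x < 0 then 1 else (0::real))"
  have \<psi>: "\<psi> \<in> borel_measurable M" "\<And>x. \<bar>\<psi> x\<bar> \<le> 1" using int by (auto simp: \<psi>_def)
  define hp where "hp = (\<lambda>x. max (h x) 0)"
  define hn where "hn = (\<lambda>x. max (- h x) 0)"
  have int_pn: "integrable M hp" "integrable M hn" unfolding hp_def hn_def using int by auto
  have "0 \<le> (\<integral>x. \<psi> x * ((S t h x - h x) / t) \<partial>M)" if t: "0 < t" for t
  proof -
    have "h = (\<lambda>x. hp x - hn x)" unfolding hp_def hn_def by (auto simp: max_def)
    then have "AE x in M. S t h x = S t hp x - S t hn x"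
      using S_diff[of t hp hn] t int_pn by simp
    moreover have "AE x in M. 0 \<le> S t hp x" "AE x in M. 0 \<le> S t hn x"
      using S_nonneg[of t hp] S_nonneg[of t hn] t int_pn by (auto simp: hp_def hn_def)
    ultimately have "AE x in M. - S t hn x \<le> \<psi> x * S t h x"
      by eventually_elim (auto simp: \<psi>_def)
    then have "- (\<integral>x. S t hn x \<partial>M) \<le> (\<integral>x. \<psi> x * S t h x \<partial>M)"
      using integral_mono_AE[of M "\<lambda>x. - S t hn x" "\<lambda>x. \<psi> x * S t h x"]
        integrable_S[of t] integrable_bounded_mult[OF \<psi>] t int int_pn by simp
    moreover have "(\<integral>x. S t hn x \<partial>M) \<le> l1_norm M hn"
      using integral_le_l1_norm[of M "S t hn"] l1_norm_S_le[of t hn] t int_pn by linarith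
    moreover have "(\<lambda>x. \<psi> x * h x) = (\<lambda>x. - \<bar>hn x\<bar>)"
      by (auto simp: \<psi>_def hn_def)
    then have "(\<integral>x. \<psi> x * h x \<partial>M) = - l1_norm M hn"
      by (simp add: l1_norm_def)
    ultimately show ?thesis
      unfolding integral_bounded_mult_difference_quotient[OF \<psi> int t] using t by simp
  qed
  then have lower: "0 \<le> (\<integral>x. \<psi> x * (lam * h x - f x) \<partial>M)"
    by (intro tendsto_lowerbound[OF generator_bounded_mult_tendsto[OF g \<psi>]])
       (auto simp: eventually_at_right_field intro!: exI[of _ 1])
  have "(\<integral>x. \<psi> x * (lam * h x - f x) \<partial>M) \<le> (\<integral>x. - lam * hn x \<partial>M)"
  proof (rule integral_mono_AE)
    show "integrable M (\<lambda>x. \<psi> x * (lam * h x - f x))"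
      by (rule integrable_bounded_mult[OF \<psi>]) (use int f in auto)
    show "AE x in M. \<psi> x * (lam * h x - f x) \<le> - lam * hn x"
      using f(2) by eventually_elim (use lam in \<open>auto simp: \<psi>_def hn_def\<close>)
  qed (use int_pn in auto)
  also have "\<dots> = - lam * l1_norm M hn" by (simp add: l1_norm_def hn_def)
  finally have "lam * l1_norm M hn \<le> 0" using lower by linarith
  then have "l1_norm M hn = 0"
    using lam l1_norm_nonneg[of M hn] by (simp add: mult_le_0_iff)
  then have "AE x in M. hn x = 0" using l1_norm_eq_0_iff int_pn by blast
  then show ?thesis by eventually_elim (simp add: hn_def)
qed

lemma generator_resolvent_equation_pos:
  assumes lam: "0 < lam" and f: "integrable M f" "AE x in M. 0 < f x"
    and g: "generator M S h (\<lambda>x. lam * h x - f x)" and h: "AE x in M. 0 \<le> h x"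
  shows "AE x in M. 0 < h x"
proof -
  have int: "integrable M h" using generator_integrable g by auto
  define \<psi> where "\<psi> = (\<lambda>x. if h x = 0 then 1 else (0::real))"
  have \<psi>: "\<psi> \<in> borel_measurable M" "\<And>x. \<bar>\<psi> x\<bar> \<le> 1" using int by (auto simp: \<psi>_def)
  have "0 \<le> (\<integral>x. \<psi> x * ((S t h x - h x) / t) \<partial>M)" if t: "0 < t" for t
  proof -
    have "AE x in M. 0 \<le> S t h x" using S_nonneg[of t h] t int h by auto
    then have "0 \<le> (\<integral>x. \<psi> x * S t h x \<partial>M)"
      by (intro integral_nonneg_AE) (auto simp: \<psi>_def elim!: eventually_mono)
    moreover have "(\<lambda>x. \<psi> x * h x) = (\<lambda>x. 0)" by (auto simp: \<psi>_def)
    ultimately show ?thesis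
      unfolding integral_bounded_mult_difference_quotient[OF \<psi> int t] using t by simp
  qed
  then have "0 \<le> (\<integral>x. \<psi> x * (lam * h x - f x) \<partial>M)"
    by (intro tendsto_lowerbound[OF generator_bounded_mult_tendsto[OF g \<psi>]])
       (auto simp: eventually_at_right_field intro!: exI[of _ 1])
  moreover have "(\<lambda>x. \<psi> x * (lam * h x - f x)) = (\<lambda>x. - (\<psi> x * f x))" by (auto simp: \<psi>_def)
  moreover have nonneg: "AE x in M. 0 \<le> \<psi> x * f x"
    using f(2) by eventually_elim (auto simp: \<psi>_def)
  ultimately have "(\<integral>x. \<psi> x * f x \<partial>M) = 0"
    using integral_nonneg_AE[OF nonneg] by simp
  then have "AE x in M. \<psi> x * f x = 0"
    using integral_nonneg_eq_0_iff_AE[OF integrable_bounded_mult[OF \<psi> f(1)] nonneg] by simp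
  with f(2) h show ?thesis
    by eventually_elim (auto simp: \<psi>_def split: if_splits)
qed

end

section \<open>Existence of the resolvent\<close>

lemma substochastic_dissipative:
  assumes T: "substochastic M T" and "0 < \<delta>" "0 < lam" "integrable M x"
  shows "lam * l1_norm M x \<le> l1_norm M (\<lambda>y. lam * x y - (T x y - x y) / \<delta>)"
proof -
  have iT: "integrable M (T x)" using T assms(4) by (rule substochastic_integrable)
  have eq: "(\<lambda>y. (lam + 1/\<delta>) * x y) = (\<lambda>y. (lam * x y - (T x y - x y) / \<delta>) + (1/\<delta>) * T x y)"
    using assms(2) by (auto simp: field_simps)
  have "(lam + 1/\<delta>) * l1_norm M x = l1_norm M (\<lambda>y. (lam + 1/\<delta>) * x y)"
    using assms by (simp add: l1_norm_cmult)
  also have "\<dots> \<le> l1_norm M (\<lambda>y. lam * x y - (T x y - x y) / \<delta>) + l1_norm M (\<lambda>y. (1/\<delta>) * T x y)"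
    unfolding eq by (rule l1_norm_triangle) (use iT assms in auto)
  also have "l1_norm M (\<lambda>y. (1/\<delta>) * T x y) \<le> (1/\<delta>) * l1_norm M x"
  proof -
    have "l1_norm M (\<lambda>y. (1/\<delta>) * T x y) = (1/\<delta>) * l1_norm M (T x)"
      using l1_norm_cmult[of M "1/\<delta>" "T x"] assms(2) by simp
    then show ?thesis
      using mult_left_mono[OF substochastic_l1_norm_le[OF T assms(4)], of "1/\<delta>"] assms(2) by simp
  qed
  finally show ?thesis using assms(2) by (simp add: algebra_simps)
qed

text \<open>The resolvent of the generator is constructed as the limit, along the steps
  \<open>\<delta> = 2^-n\<close>, of the resolvents of the bounded generators \<open>(S \<delta> - I) / \<delta>\<close>; these are
  the Neumann series \<open>disc_resolvent \<delta>\<close>.\<close>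

locale resolvent_construction = substochastic_sg +
  fixes lam :: real
  assumes lam_pos: "0 < lam"
begin

definition disc_ratio :: "real \<Rightarrow> real" where
  "disc_ratio \<delta> = 1 / (1 + lam * \<delta>)"

definition disc_term :: "real \<Rightarrow> ('a \<Rightarrow> real) \<Rightarrow> nat \<Rightarrow> 'a \<Rightarrow> real" where
  "disc_term \<delta> f k = (\<lambda>x. \<delta> * disc_ratio \<delta> ^ Suc k * S (real k * \<delta>) f x)"

definition disc_resolvent :: "real \<Rightarrow> ('a \<Rightarrow> real) \<Rightarrow> 'a \<Rightarrow> real" where
  "disc_resolvent \<delta> f = (\<lambda>x. \<Sum>k. disc_term \<delta> f k x)"

lemma disc_ratio_pos: "0 < \<delta> \<Longrightarrow> 0 < disc_ratio \<delta>"
  and disc_ratio_less_1: "0 < \<delta> \<Longrightarrow> disc_ratio \<delta> < 1"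
  using mult_pos_pos[OF lam_pos, of \<delta>] by (auto simp: disc_ratio_def)

lemma disc_ratio_sums:
  assumes "0 < \<delta>"
  shows "(\<lambda>k. \<delta> * disc_ratio \<delta> ^ Suc k * c) sums (c / lam)"
proof -
  define q where "q = disc_ratio \<delta>"
  have q: "norm q < 1" using disc_ratio_pos[OF assms] disc_ratio_less_1[OF assms] by (simp add: q_def)
  have "0 < lam * \<delta>" using assms lam_pos by simp
  then have "1 - q = lam * \<delta> * q"
    by (simp add: q_def disc_ratio_def field_simps)
  then have "\<delta> * q * c * (1 / (1 - q)) = c / lam"
    using assms lam_pos disc_ratio_pos[OF assms] by (simp add: q_def)
  then have "(\<lambda>k. (\<delta> * q * c) * q ^ k) sums (c / lam)"
    using sums_mult[OF geometric_sums[OF q], of "\<delta> * q * c"] by simp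
  then show ?thesis by (simp add: q_def algebra_simps)
qed

lemma integrable_disc_term: "0 < \<delta> \<Longrightarrow> integrable M f \<Longrightarrow> integrable M (disc_term \<delta> f k)"
  unfolding disc_term_def using integrable_S[of "real k * \<delta>" f] by auto

lemma l1_norm_disc_term_le:
  assumes "0 < \<delta>" "integrable M f"
  shows "l1_norm M (disc_term \<delta> f k) \<le> \<delta> * disc_ratio \<delta> ^ Suc k * l1_norm M f"
proof -
  have "0 < \<delta> * disc_ratio \<delta> ^ Suc k"
    using disc_ratio_pos assms by simp
  then have "l1_norm M (disc_term \<delta> f k) = \<delta> * disc_ratio \<delta> ^ Suc k * l1_norm M (S (real k * \<delta>) f)"
    unfolding disc_term_def
    using l1_norm_cmult[of M "\<delta> * disc_ratio \<delta> ^ Suc k" "S (real k * \<delta>) f"] by (simp add: mult.assoc)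
  also have "\<dots> \<le> \<delta> * disc_ratio \<delta> ^ Suc k * l1_norm M f"
    using l1_norm_S_le[of "real k * \<delta>" f] assms disc_ratio_pos[OF assms(1)] by (intro mult_left_mono) auto
  finally show ?thesis .
qed

lemma disc_resolvent:
  assumes "0 < \<delta>" "integrable M f"
  shows integrable_disc_resolvent: "integrable M (disc_resolvent \<delta> f)"
    and l1_norm_disc_resolvent_le: "l1_norm M (disc_resolvent \<delta> f) \<le> l1_norm M f / lam"
    and disc_resolvent_tendsto:
      "(\<lambda>n. l1_dist M (\<lambda>x. \<Sum>k<n. disc_term \<delta> f k x) (disc_resolvent \<delta> f)) \<longlonglongrightarrow> 0"
    and disc_resolvent_summable_AE: "AE x in M. summable (\<lambda>k. \<bar>disc_term \<delta> f k x\<bar>)"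
proof -
  note sums = disc_ratio_sums[OF assms(1), of "l1_norm M f"]
  have "summable (\<lambda>k. l1_norm M (disc_term \<delta> f k))"
    by (rule summable_comparison_test[OF _ sums_summable[OF sums]])
       (use l1_norm_disc_term_le[OF assms] in \<open>auto simp: l1_norm_nonneg\<close>)
  note series = l1_series_convergent[OF integrable_disc_term[OF assms] this]
  have "(\<Sum>k. l1_norm M (disc_term \<delta> f k)) \<le> l1_norm M f / lam"
    using suminf_le[OF _ \<open>summable _\<close> sums_summable[OF sums]] l1_norm_disc_term_le[OF assms]
      sums_unique[OF sums] by auto
  then show "l1_norm M (disc_resolvent \<delta> f) \<le> l1_norm M f / lam"
    using series(3) by (simp add: disc_resolvent_def)
  show "integrable M (disc_resolvent \<delta> f)"
    "(\<lambda>n. l1_dist M (\<lambda>x. \<Sum>k<n. disc_term \<delta> f k x) (disc_resolvent \<delta> f)) \<longlonglongrightarrow> 0"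
    "AE x in M. summable (\<lambda>k. \<bar>disc_term \<delta> f k x\<bar>)"
    using series by (simp_all add: disc_resolvent_def)
qed

lemma disc_resolvent_lincomb:
  assumes "0 < \<delta>" "integrable M f" "integrable M g"
  shows "AE x in M. disc_resolvent \<delta> (\<lambda>y. a * f y + b * g y) x
    = a * disc_resolvent \<delta> f x + b * disc_resolvent \<delta> g x"
proof -
  have "AE x in M. \<forall>k. S (real k * \<delta>) (\<lambda>y. a * f y + b * g y) x
      = a * S (real k * \<delta>) f x + b * S (real k * \<delta>) g x"
    unfolding AE_all_countable using l1_linear_lincomb[OF l1_linear_S assms(2,3)] assms(1) by simp
  with disc_resolvent_summable_AE[OF assms(1,2)] disc_resolvent_summable_AE[OF assms(1,3)]
  show ?thesis
  proof eventually_elim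
    case (elim x)
    have sf: "summable (\<lambda>k. disc_term \<delta> f k x)" using elim(1) by (rule summable_rabs_cancel)
    have sg: "summable (\<lambda>k. disc_term \<delta> g k x)" using elim(2) by (rule summable_rabs_cancel)
    have "disc_resolvent \<delta> (\<lambda>y. a * f y + b * g y) x
        = (\<Sum>k. a * disc_term \<delta> f k x + b * disc_term \<delta> g k x)"
      using elim(3) by (simp add: disc_resolvent_def disc_term_def algebra_simps)
    also have "\<dots> = (\<Sum>k. a * disc_term \<delta> f k x) + (\<Sum>k. b * disc_term \<delta> g k x)"
      by (intro suminf_add[symmetric] summable_mult sf sg)
    also have "\<dots> = a * disc_resolvent \<delta> f x + b * disc_resolvent \<delta> g x"
      by (simp add: disc_resolvent_def suminf_mult sf sg)
    finally show ?case .
  qed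
qed

lemma disc_resolvent_commute:
  assumes "0 < \<delta>" "0 \<le> s" "integrable M f"
  shows "AE x in M. S s (disc_resolvent \<delta> f) x = disc_resolvent \<delta> (S s f) x"
proof -
  have int_Sf: "integrable M (S s f)" using integrable_S assms by auto
  define P where "P n = (\<lambda>x. \<Sum>k<n. disc_term \<delta> f k x)" for n
  define Q where "Q n = (\<lambda>x. \<Sum>k<n. disc_term \<delta> (S s f) k x)" for n
  have int_P: "integrable M (P n)" for n
    unfolding P_def using integrable_disc_term[OF assms(1,3)] by auto
  have int_Q: "integrable M (Q n)" for n
    unfolding Q_def using integrable_disc_term[OF assms(1) int_Sf] by auto
  have int_SP: "integrable M (S s (P n))" for n using integrable_S[OF assms(2) int_P] .
  have "AE x in M. Q n x = S s (P n) x" for n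
  proof -
    have "AE x in M. S s (P n) x = (\<Sum>k<n. S s (disc_term \<delta> f k) x)"
      unfolding P_def
      by (rule l1_linear_sum[OF l1_linear_S[OF assms(2)]]) (use integrable_disc_term[OF assms(1,3)] in auto)
    moreover have "AE x in M. \<forall>k. S s (disc_term \<delta> f k) x
        = \<delta> * disc_ratio \<delta> ^ Suc k * S s (S (real k * \<delta>) f) x"
      unfolding AE_all_countable disc_term_def
      using l1_linear_cmult[OF l1_linear_S[OF assms(2)] integrable_S[OF _ assms(3)]] assms(1) by simp
    moreover have "AE x in M. \<forall>k. S s (S (real k * \<delta>) f) x = S (real k * \<delta>) (S s f) x"
      unfolding AE_all_countable using S_commute[OF assms(2) _ assms(3)] assms(1) by simp
    ultimately show ?thesis
      by eventually_elim (simp add: Q_def disc_term_def)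
  qed
  then have "(\<lambda>n. l1_dist M (S s (P n)) (disc_resolvent \<delta> (S s f))) \<longlonglongrightarrow> 0"
    by (rule l1_tendsto_cong_AE[OF int_Q int_SP integrable_disc_resolvent[OF assms(1) int_Sf]])
       (use disc_resolvent_tendsto[OF assms(1) int_Sf] in \<open>simp add: Q_def\<close>)
  moreover have "(\<lambda>n. l1_dist M (S s (P n)) (S s (disc_resolvent \<delta> f))) \<longlonglongrightarrow> 0"
    by (rule l1_tendsto_substochastic[OF substochastic_S[OF assms(2)] int_P
          integrable_disc_resolvent[OF assms(1,3)]])
       (use disc_resolvent_tendsto[OF assms(1,3)] in \<open>simp add: P_def\<close>)
  ultimately show ?thesis
    by (intro l1_limit_unique[OF int_SP] integrable_S[OF assms(2)] integrable_disc_resolvent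
        assms int_Sf)
qed

lemma disc_resolvent_equation:
  assumes "0 < \<delta>" "integrable M f"
  shows "AE x in M. S \<delta> (disc_resolvent \<delta> f) x
    = disc_resolvent \<delta> f x + \<delta> * (lam * disc_resolvent \<delta> f x - f x)"
proof -
  have d0: "0 \<le> \<delta>" using assms by simp
  define q where "q = disc_ratio \<delta>"
  have q0: "0 < q" using disc_ratio_pos[OF assms(1)] by (simp add: q_def)
  define P where "P n = (\<lambda>x. \<Sum>k<n. disc_term \<delta> f k x)" for n
  have int_P: "integrable M (P n)" for n unfolding P_def using integrable_disc_term[OF assms] by auto
  have int_SP: "integrable M (S \<delta> (P n))" for n using integrable_S[OF d0 int_P] .
  have int_R: "integrable M (disc_resolvent \<delta> f)" using integrable_disc_resolvent[OF assms] .
  have int_S0: "integrable M (S 0 f)" using integrable_S[OF order_refl assms(2)] .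
  define W where "W n = (\<lambda>x. (1/q) * P (Suc n) x + (- \<delta>) * S 0 f x)" for n
  have int_W: "integrable M (W n)" for n unfolding W_def using int_P int_S0 by auto
  have "AE x in M. W n x = S \<delta> (P n) x" for n
  proof -
    have a1: "AE x in M. S \<delta> (P n) x = (\<Sum>k<n. S \<delta> (disc_term \<delta> f k) x)"
      unfolding P_def by (rule l1_linear_sum[OF l1_linear_S[OF d0]]) (use integrable_disc_term[OF assms] in auto)
    have a2: "AE x in M. \<forall>k. S \<delta> (disc_term \<delta> f k) x = \<delta> * q ^ Suc k * S \<delta> (S (real k * \<delta>) f) x"
      unfolding AE_all_countable disc_term_def q_def
      using l1_linear_cmult[OF l1_linear_S[OF d0] integrable_S[OF _ assms(2)]] d0 by simp
    have "AE x in M. S \<delta> (S (real k * \<delta>) f) x = S (real (Suc k) * \<delta>) f x" for k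
      using S_add[OF d0 _ assms(2), of "real k * \<delta>"] d0
      by (auto simp: algebra_simps elim: eventually_mono)
    then have a3: "AE x in M. \<forall>k. S \<delta> (S (real k * \<delta>) f) x = S (real (Suc k) * \<delta>) f x"
      unfolding AE_all_countable by blast
    have pw: "W n x = (\<Sum>k<n. \<delta> * q ^ Suc k * S (real (Suc k) * \<delta>) f x)" for x
    proof -
      have "P (Suc n) x = \<delta> * q * S 0 f x + q * (\<Sum>k<n. \<delta> * q ^ Suc k * S (real (Suc k) * \<delta>) f x)"
        unfolding P_def disc_term_def q_def[symmetric]
        by (subst sum.lessThan_Suc_shift) (simp add: algebra_simps sum_distrib_left)
      then show ?thesis using q0 unfolding W_def by (simp add: field_simps)
    qed
    from a1 a2 a3 show ?thesis by eventually_elim (simp add: pw)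
  qed
  moreover have "(\<lambda>n. l1_dist M (W n) (\<lambda>x. (1/q) * disc_resolvent \<delta> f x + (- \<delta>) * S 0 f x)) \<longlonglongrightarrow> 0"
    unfolding W_def
  proof (rule l1_tendsto_lincomb[OF int_P int_S0 int_R int_S0])
    show "(\<lambda>n. l1_dist M (P (Suc n)) (disc_resolvent \<delta> f)) \<longlonglongrightarrow> 0"
      using LIMSEQ_Suc[OF disc_resolvent_tendsto[OF assms]] by (simp add: P_def)
  qed (simp add: l1_dist_def)
  ultimately have "(\<lambda>n. l1_dist M (S \<delta> (P n)) (\<lambda>x. (1/q) * disc_resolvent \<delta> f x + (- \<delta>) * S 0 f x)) \<longlonglongrightarrow> 0"
    by (intro l1_tendsto_cong_AE[OF int_W int_SP]) (use int_R int_S0 in auto)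
  moreover have "(\<lambda>n. l1_dist M (S \<delta> (P n)) (S \<delta> (disc_resolvent \<delta> f))) \<longlonglongrightarrow> 0"
    by (rule l1_tendsto_substochastic[OF substochastic_S[OF d0] int_P int_R])
       (use disc_resolvent_tendsto[OF assms] in \<open>simp add: P_def\<close>)
  ultimately have "AE x in M. S \<delta> (disc_resolvent \<delta> f) x = (1/q) * disc_resolvent \<delta> f x + (- \<delta>) * S 0 f x"
    by (intro l1_limit_unique[OF int_SP]) (use integrable_S[OF d0 int_R] int_R int_S0 in auto)
  with S_0[OF assms(2)] show ?thesis
    by eventually_elim (simp add: q_def disc_ratio_def algebra_simps)
qed

end

context resolvent_construction
begin

lemma disc_resolvent_shift_defect_le:
  assumes d: "0 < d" and r: "0 \<le> r" and f: "integrable M f"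
  defines "y \<equiv> \<lambda>x. lam * disc_resolvent d f x - f x"
  shows "l1_norm M (\<lambda>z. S r y z - y z) \<le> 2 * l1_dist M (S r f) f"
proof -
  define g where "g = (\<lambda>z. 1 * S r f z + (-1) * f z)"
  have int_Sf: "integrable M (S r f)" using integrable_S[OF r f] .
  have int_g: "integrable M g" unfolding g_def using int_Sf f by auto
  have int_y: "integrable M y" unfolding y_def using integrable_disc_resolvent[OF d f] f by auto
  have y_eq: "y = (\<lambda>z. lam * disc_resolvent d f z + (-1) * f z)"
    by (simp add: y_def)
  have a1: "AE z in M. S r y z = lam * S r (disc_resolvent d f) z + (-1) * S r f z"
    unfolding y_eq by (rule l1_linear_lincomb[OF l1_linear_S[OF r] integrable_disc_resolvent[OF d f] f])
  have a2: "AE z in M. S r (disc_resolvent d f) z = disc_resolvent d (S r f) z"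
    by (rule disc_resolvent_commute[OF d r f])
  have a3: "AE z in M. disc_resolvent d g z = 1 * disc_resolvent d (S r f) z + (-1) * disc_resolvent d f z"
    unfolding g_def by (rule disc_resolvent_lincomb[OF d int_Sf f])
  have "l1_norm M (\<lambda>z. S r y z - y z) = l1_norm M (\<lambda>z. lam * disc_resolvent d g z + (-1) * g z)"
  proof (rule l1_norm_cong_AE)
    from a1 a2 a3 show "AE z in M. S r y z - y z = lam * disc_resolvent d g z + (-1) * g z"
    proof eventually_elim
      case (elim z)
      from elim(1,2) have "S r y z = lam * disc_resolvent d (S r f) z - S r f z" by simp
      moreover from elim(3)
      have "lam * disc_resolvent d g z = lam * disc_resolvent d (S r f) z - lam * disc_resolvent d f z"
        by (simp add: right_diff_distrib[symmetric])
      moreover have "y z = lam * disc_resolvent d f z - f z" by (simp add: y_def)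
      moreover have "g z = S r f z - f z" by (simp add: g_def)
      ultimately show ?case by linarith
    qed
  qed (use integrable_S[OF r int_y] int_y integrable_disc_resolvent[OF d int_g] int_g in auto)
  also have "\<dots> \<le> l1_norm M (\<lambda>z. lam * disc_resolvent d g z) + l1_norm M (\<lambda>z. (-1) * g z)"
    by (rule l1_norm_triangle) (use integrable_disc_resolvent[OF d int_g] int_g in auto)
  also have "l1_norm M (\<lambda>z. lam * disc_resolvent d g z) \<le> l1_norm M g"
    using mult_left_mono[OF l1_norm_disc_resolvent_le[OF d int_g], of lam] lam_pos
    by (simp add: l1_norm_cmult)
  also have "l1_norm M (\<lambda>z. (-1) * g z) = l1_norm M g"
    by (simp add: l1_norm_minus)
  finally show ?thesis
    by (simp add: g_def l1_dist_eq_l1_norm)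
qed

lemma disc_resolvent_refine_identity:
  assumes d: "0 < \<delta>" and N: "1 \<le> N" and f: "integrable M f"
  defines "h \<equiv> disc_resolvent \<delta> f" and "h' \<equiv> disc_resolvent (\<delta> / real N) f"
    and "y \<equiv> \<lambda>x. lam * disc_resolvent (\<delta> / real N) f x - f x"
  shows "AE z in M. lam * (h z - h' z) - (S \<delta> (\<lambda>z. h z - h' z) z - (h z - h' z)) / \<delta>
    = (\<Sum>i<N. (1 / real N) * (S (real i * (\<delta> / real N)) y z - y z))"
proof -
  define d' where "d' = \<delta> / real N"
  have d': "0 < d'" using d N by (simp add: d'_def)
  have Nd: "real N * d' = \<delta>" using N by (simp add: d'_def)
  have int_h: "integrable M h" "integrable M h'"
    unfolding h_def h'_def using integrable_disc_resolvent d d' f by (auto simp: d'_def)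
  have int_y: "integrable M y" unfolding y_def using int_h f by (auto simp: h'_def)
  have E1: "AE z in M. S \<delta> h z = h z + \<delta> * (lam * h z - f z)"
    unfolding h_def by (rule disc_resolvent_equation[OF d f])
  have "AE z in M. S d' h' z = h' z + d' * y z"
    using disc_resolvent_equation[OF d' f] unfolding h'_def y_def d'_def by simp
  then have E2: "AE z in M. S (real N * d') h' z - h' z = d' * (\<Sum>i<N. S (real i * d') y z)"
    by (rule S_telescope[OF less_imp_le[OF d'] int_h(2) int_y])
  have E3: "AE z in M. S \<delta> (\<lambda>z. h z - h' z) z = S \<delta> h z - S \<delta> h' z"
    by (rule S_diff) (use d int_h in auto)
  from E1 E2 E3 show ?thesis
  proof eventually_elim
    case (elim z)
    have sum: "(\<Sum>i<N. (1 / real N) * (S (real i * d') y z - y z))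
        = (1 / real N) * (\<Sum>i<N. S (real i * d') y z) - y z"
      using N by (simp add: sum_distrib_left[symmetric] sum_subtractf right_diff_distrib
          sum_divide_distrib)
    have "lam * (h z - h' z) - (S \<delta> (\<lambda>z. h z - h' z) z - (h z - h' z)) / \<delta>
        = lam * (h z - h' z) - (\<delta> * (lam * h z - f z) - (S \<delta> h' z - h' z)) / \<delta>"
      using elim by simp
    also have "\<dots> = lam * (h z - h' z) - (lam * h z - f z) + (S \<delta> h' z - h' z) / \<delta>"
      using d by (simp add: diff_divide_distrib)
    also have "(S \<delta> h' z - h' z) / \<delta> = (1 / real N) * (\<Sum>i<N. S (real i * d') y z)"
      using elim(2) Nd d N by (simp add: d'_def)
    finally show ?case
      unfolding sum d'_def[symmetric] by (simp add: y_def h'_def d'_def algebra_simps)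
  qed
qed

text \<open>Refining the step from \<open>\<delta>\<close> to \<open>\<delta> / N\<close> moves the discrete resolvent by at most twice the
  oscillation of \<open>S r f\<close> over \<open>0 \<le> r \<le> \<delta>\<close>: the difference of the two discrete resolvents is
  estimated through dissipativity of \<open>(S \<delta> - I) / \<delta>\<close>, after writing \<open>S \<delta> - I\<close> as a telescoping
  sum of \<open>N\<close> steps of length \<open>\<delta> / N\<close>.\<close>

lemma disc_resolvent_refine_l1_dist_le:
  assumes d: "0 < \<delta>" and N: "1 \<le> N" and f: "integrable M f"
    and osc: "\<And>r. 0 \<le> r \<Longrightarrow> r \<le> \<delta> \<Longrightarrow> l1_dist M (S r f) f \<le> e"
  shows "l1_dist M (disc_resolvent \<delta> f) (disc_resolvent (\<delta> / real N) f) \<le> 2 * e / lam"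
proof -
  define d' where "d' = \<delta> / real N"
  have d': "0 < d'" using d N by (simp add: d'_def)
  have Nd: "real N * d' = \<delta>" using N by (simp add: d'_def)
  define x where "x = (\<lambda>z. disc_resolvent \<delta> f z - disc_resolvent d' f z)"
  have int_x: "integrable M x"
    unfolding x_def using integrable_disc_resolvent d d' f by auto
  define y where "y = (\<lambda>z. lam * disc_resolvent d' f z - f z)"
  have int_y: "integrable M y"
    unfolding y_def using integrable_disc_resolvent[OF d' f] f by auto
  define F where "F = (\<lambda>i z. (1 / real N) * (S (real i * d') y z - y z))"
  have int_F: "integrable M (F i)" for i
    unfolding F_def using integrable_S[OF _ int_y, of "real i * d'"] d' int_y by auto
  have "l1_norm M (\<lambda>z. lam * x z - (S \<delta> x z - x z) / \<delta>) = l1_norm M (\<lambda>z. \<Sum>i<N. F i z)"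
    using disc_resolvent_refine_identity[OF d N f]
    by (intro l1_norm_cong_AE)
       (use integrable_S[OF _ int_x, of \<delta>] d int_x int_F in \<open>auto simp: x_def y_def F_def d'_def\<close>)
  also have "\<dots> \<le> (\<Sum>i<N. l1_norm M (F i))"
    by (rule l1_norm_sum_le) (use int_F in auto)
  also have "\<dots> \<le> (\<Sum>i<N. (1 / real N) * (2 * e))"
  proof (rule sum_mono)
    fix i assume "i \<in> {..<N}"
    then have r: "0 \<le> real i * d'" "real i * d' \<le> \<delta>"
      using d' Nd by (auto intro!: mult_right_mono simp flip: Nd)
    have "l1_norm M (\<lambda>z. S (real i * d') y z - y z) \<le> 2 * e"
      using disc_resolvent_shift_defect_le[OF d' r(1) f] osc[OF r] unfolding y_def by simp
    then show "l1_norm M (F i) \<le> (1 / real N) * (2 * e)"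
      unfolding F_def l1_norm_cmult using N by (simp add: divide_right_mono)
  qed
  also have "\<dots> = 2 * e" using N by simp
  finally have "lam * l1_norm M x \<le> 2 * e"
    using substochastic_dissipative[OF substochastic_S[OF less_imp_le[OF d]] d lam_pos int_x] by linarith
  then show ?thesis
    using lam_pos by (simp add: x_def d'_def l1_dist_eq_l1_norm field_simps)
qed

definition dyadic_resolvent :: "('a \<Rightarrow> real) \<Rightarrow> nat \<Rightarrow> 'a \<Rightarrow> real" where
  "dyadic_resolvent f n = disc_resolvent (1 / 2 ^ n) f"

lemma integrable_dyadic_resolvent: "integrable M f \<Longrightarrow> integrable M (dyadic_resolvent f n)"
  unfolding dyadic_resolvent_def by (rule integrable_disc_resolvent) auto

lemma dyadic_resolvent_convergent:
  assumes f: "integrable M f"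
  shows "\<exists>h. integrable M h \<and> (\<lambda>n. l1_dist M (dyadic_resolvent f n) h) \<longlonglongrightarrow> 0"
proof (rule l1_Cauchy_convergent[OF integrable_dyadic_resolvent[OF f]])
  fix e :: real assume e: "0 < e"
  define e' where "e' = e * lam / 8"
  have e': "0 < e'" using e lam_pos by (simp add: e'_def)
  obtain \<eta> where \<eta>: "0 < \<eta>" "\<And>r. 0 \<le> r \<Longrightarrow> r < \<eta> \<Longrightarrow> l1_dist M (S r f) f < e'"
    using S_strongly_continuous[OF f e'] by auto
  obtain n0 where n0: "1 / 2 ^ n0 < \<eta>"
    using real_arch_pow_inv[of \<eta> "1/2"] \<eta>(1) by (auto simp: power_one_over)
  have step: "l1_dist M (dyadic_resolvent f n0) (dyadic_resolvent f m) \<le> e / 4" if "n0 \<le> m" for m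
  proof -
    have "(1 / 2 ^ n0) / real ((2::nat) ^ (m - n0)) = (1 / 2 ^ m :: real)"
      using that by (simp add: field_simps flip: power_add)
    moreover have "l1_dist M (disc_resolvent (1 / 2 ^ n0) f)
        (disc_resolvent ((1 / 2 ^ n0) / real ((2::nat) ^ (m - n0))) f) \<le> 2 * e' / lam"
      by (rule disc_resolvent_refine_l1_dist_le) (use f \<eta>(2) n0 in \<open>auto intro: less_imp_le\<close>)
    ultimately show ?thesis
      using lam_pos by (simp add: dyadic_resolvent_def e'_def)
  qed
  show "\<exists>N. \<forall>m\<ge>N. \<forall>n\<ge>N. l1_dist M (dyadic_resolvent f m) (dyadic_resolvent f n) < e"
  proof (intro exI allI impI)
    fix m n assume "n0 \<le> m" "n0 \<le> n"
    have "l1_dist M (dyadic_resolvent f m) (dyadic_resolvent f n)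
        \<le> l1_dist M (dyadic_resolvent f m) (dyadic_resolvent f n0)
          + l1_dist M (dyadic_resolvent f n0) (dyadic_resolvent f n)"
      by (rule l1_dist_triangle) (use integrable_dyadic_resolvent[OF f] in auto)
    also have "\<dots> \<le> e / 4 + e / 4"
      using step[OF \<open>n0 \<le> m\<close>] step[OF \<open>n0 \<le> n\<close>] l1_dist_commute by (metis add_mono)
    finally show "l1_dist M (dyadic_resolvent f m) (dyadic_resolvent f n) < e"
      using e by simp
  qed
qed

end

lemma dyadic_floor_bounds:
  fixes t :: real
  assumes "0 \<le> t"
  shows "real (nat \<lfloor>t * 2 ^ n\<rfloor>) * (1 / 2 ^ n) \<le> t"
    and "t - real (nat \<lfloor>t * 2 ^ n\<rfloor>) * (1 / 2 ^ n) < 1 / 2 ^ n"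
proof -
  define m where "m = real_of_int \<lfloor>t * 2 ^ n\<rfloor>"
  have m: "real (nat \<lfloor>t * 2 ^ n\<rfloor>) = m" "m \<le> t * 2 ^ n" "t * 2 ^ n < m + 1"
    using assms of_int_floor_le[of "t * 2 ^ n"] real_of_int_floor_add_one_gt[of "t * 2 ^ n"]
    unfolding m_def by auto
  have "t - m * (1 / 2 ^ n) = (t * 2 ^ n - m) / 2 ^ n"
    by (simp add: field_simps)
  also have "\<dots> < 1 / 2 ^ n"
    using m by (intro divide_strict_right_mono) auto
  finally show "t - real (nat \<lfloor>t * 2 ^ n\<rfloor>) * (1 / 2 ^ n) < 1 / 2 ^ n"
    unfolding m(1) .
  show "real (nat \<lfloor>t * 2 ^ n\<rfloor>) * (1 / 2 ^ n) \<le> t"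
    using m by (simp add: field_simps)
qed

context resolvent_construction
begin

lemma disc_resolvent_generator_defect_le:
  assumes f: "integrable M f" and h: "integrable M h" and d: "0 < \<delta>"
    and g_def: "g = (\<lambda>x. lam * h x - f x)"
    and osc: "\<And>r. 0 \<le> r \<Longrightarrow> r \<le> real k * \<delta> \<Longrightarrow> l1_dist M (S r g) g \<le> e"
  defines "u \<equiv> disc_resolvent \<delta> f"
  shows "l1_norm M (\<lambda>x. S (real k * \<delta>) u x - u x - (real k * \<delta>) * g x)
     \<le> (real k * \<delta>) * (lam * l1_dist M u h + e)"
proof -
  have int_u: "integrable M u" unfolding u_def using integrable_disc_resolvent[OF d f] .
  define v where "v = (\<lambda>x. lam * u x - f x)"
  have int_v: "integrable M v" unfolding v_def using int_u f by auto
  have int_g: "integrable M g" unfolding g_def using h f by auto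
  have i0: "0 \<le> real i * \<delta>" for i using d by simp
  have "AE x in M. S \<delta> u x = u x + \<delta> * v x"
    unfolding u_def v_def by (rule disc_resolvent_equation[OF d f])
  then have tele: "AE x in M. S (real k * \<delta>) u x - u x = \<delta> * (\<Sum>i<k. S (real i * \<delta>) v x)"
    by (rule S_telescope[OF less_imp_le[OF d] int_u int_v])
  define D where "D i = (\<lambda>x. S (real i * \<delta>) v x - g x)" for i
  have int_D: "integrable M (D i)" for i
    unfolding D_def using integrable_S[OF i0 int_v] int_g by auto
  have D_le: "l1_norm M (D i) \<le> lam * l1_dist M u h + e" if "i < k" for i
  proof -
    have "real i * \<delta> \<le> real k * \<delta>" using that d by simp
    have "l1_norm M (D i) \<le> l1_dist M v g + l1_dist M (S (real i * \<delta>) g) g"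
      using l1_dist_S_le_add[OF i0 int_v int_g] by (simp add: D_def l1_dist_eq_l1_norm)
    also have "l1_dist M v g = lam * l1_dist M u h"
      using lam_pos l1_norm_cmult[of M lam "\<lambda>x. u x - h x"]
      by (simp add: v_def g_def l1_dist_eq_l1_norm algebra_simps)
    finally show ?thesis
      using osc[OF i0 \<open>real i * \<delta> \<le> real k * \<delta>\<close>] by simp
  qed
  have "l1_norm M (\<lambda>x. S (real k * \<delta>) u x - u x - (real k * \<delta>) * g x)
      = l1_norm M (\<lambda>x. \<delta> * (\<Sum>i<k. D i x))"
  proof (rule l1_norm_cong_AE)
    show "AE x in M. S (real k * \<delta>) u x - u x - (real k * \<delta>) * g x = \<delta> * (\<Sum>i<k. D i x)"
      using tele by eventually_elim (simp add: D_def sum_subtractf algebra_simps)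
  qed (use integrable_S[OF i0 int_u] int_u int_g int_D in auto)
  also have "\<dots> = \<delta> * l1_norm M (\<lambda>x. \<Sum>i<k. D i x)"
    using d by (simp add: l1_norm_cmult)
  also have "\<dots> \<le> \<delta> * (\<Sum>i<k. l1_norm M (D i))"
    by (rule mult_left_mono[OF l1_norm_sum_le]) (use int_D d in auto)
  also have "\<dots> \<le> \<delta> * (\<Sum>i<k. lam * l1_dist M u h + e)"
    by (rule mult_left_mono[OF sum_mono]) (use D_le d in auto)
  finally show ?thesis by (simp add: mult_ac)
qed

text \<open>The defect of the candidate \<open>h\<close> at time \<open>t\<close> splits into the defect of a discrete resolvent
  at a grid time \<open>k \<delta> \<le> t\<close> and errors that vanish as \<open>\<delta> \<rightarrow> 0\<close>.\<close>

lemma generator_defect_split: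
  assumes f: "integrable M f" and h: "integrable M h" and t: "0 \<le> t" and d: "0 < \<delta>"
    and g_def: "g = (\<lambda>x. lam * h x - f x)"
    and osc: "\<And>r. 0 \<le> r \<Longrightarrow> r \<le> t \<Longrightarrow> l1_dist M (S r g) g \<le> e"
    and kt: "real k * \<delta> \<le> t"
  defines "u \<equiv> disc_resolvent \<delta> f" and "s \<equiv> real k * \<delta>"
  shows "l1_norm M (\<lambda>x. S t h x - h x - t * g x)
    \<le> s * (lam * l1_dist M u h + e) + 2 * l1_dist M u h + l1_dist M (S (t - s) h) h
      + (t - s) * l1_norm M g"
proof -
  have s: "0 \<le> s" "0 \<le> t - s" using d kt by (auto simp: s_def)
  have int_u: "integrable M u" unfolding u_def using integrable_disc_resolvent[OF d f] .
  have int_g: "integrable M g" unfolding g_def using h f by auto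
  have int: "integrable M (S t h)" "integrable M (S s u)" "integrable M (S s h)"
    "integrable M (S (t - s) h)" "integrable M (S s (S (t - s) h))"
    using integrable_S s h int_u t by auto
  have grid: "l1_norm M (\<lambda>x. S s u x - u x - s * g x) \<le> s * (lam * l1_dist M u h + e)"
    unfolding s_def u_def
    by (rule disc_resolvent_generator_defect_le[OF f h d g_def]) (use osc kt in auto)
  have "AE x in M. S (s + (t - s)) h x = S s (S (t - s) h) x"
    by (rule S_add[OF s h])
  then have "l1_dist M (S t h) (S s u) = l1_dist M (S s (S (t - s) h)) (S s u)"
    by (intro l1_dist_cong_AE) (use int in auto)
  also have "\<dots> \<le> l1_dist M (S s (S (t - s) h)) (S s h) + l1_dist M (S s h) (S s u)"
    by (rule l1_dist_triangle) (use int int_u integrable_S[OF s(1) int_u] in auto)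
  also have "\<dots> \<le> l1_dist M (S (t - s) h) h + l1_dist M h u"
    by (intro add_mono l1_dist_S_le) (use s int h int_u in auto)
  finally have shift: "l1_dist M (S t h) (S s u) \<le> l1_dist M (S (t - s) h) h + l1_dist M u h"
    by (simp add: l1_dist_commute)
  have "l1_norm M (\<lambda>x. S t h x - h x - t * g x)
      = l1_norm M (\<lambda>x. (S s u x - u x - s * g x) + ((S t h x - S s u x) - (h x - u x) - (t - s) * g x))"
    by (simp add: algebra_simps)
  also have "\<dots> \<le> l1_norm M (\<lambda>x. S s u x - u x - s * g x)
      + l1_norm M (\<lambda>x. (S t h x - S s u x) - (h x - u x) - (t - s) * g x)"
    by (rule l1_norm_triangle) (use int int_u h int_g integrable_S[OF s(1) int_u] in auto)
  also have "l1_norm M (\<lambda>x. (S t h x - S s u x) - (h x - u x) - (t - s) * g x)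
      \<le> l1_norm M (\<lambda>x. (S t h x - S s u x) - (h x - u x)) + l1_norm M (\<lambda>x. (t - s) * g x)"
    by (rule l1_norm_diff_le) (use int int_u h int_g integrable_S[OF s(1) int_u] in auto)
  also have "l1_norm M (\<lambda>x. (S t h x - S s u x) - (h x - u x))
      \<le> l1_dist M (S t h) (S s u) + l1_dist M h u"
    unfolding l1_dist_eq_l1_norm
    by (rule l1_norm_diff_le) (use int int_u h integrable_S[OF s(1) int_u] in auto)
  finally show ?thesis
    using grid shift s(2) l1_dist_commute[of M h u] by (simp add: l1_norm_cmult)
qed

lemma generator_defect_le:
  assumes f: "integrable M f" and h: "integrable M h"
    and conv: "(\<lambda>n. l1_dist M (dyadic_resolvent f n) h) \<longlonglongrightarrow> 0"
    and g_def: "g = (\<lambda>x. lam * h x - f x)"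
    and t: "0 \<le> t" and osc: "\<And>r. 0 \<le> r \<Longrightarrow> r \<le> t \<Longrightarrow> l1_dist M (S r g) g \<le> e"
  shows "l1_norm M (\<lambda>x. S t h x - h x - t * g x) \<le> t * e"
proof -
  define T where "T n = real (nat \<lfloor>t * 2 ^ n\<rfloor>) * (1 / 2 ^ n)" for n :: nat
  have T: "T n \<le> t" "t - T n < 1 / 2 ^ n" for n
    unfolding T_def using dyadic_floor_bounds[OF t] by auto
  define c where "c n = T n * (lam * l1_dist M (dyadic_resolvent f n) h + e)
    + 2 * l1_dist M (dyadic_resolvent f n) h + l1_dist M (S (t - T n) h) h
    + (t - T n) * l1_norm M (\<lambda>x. lam * h x - f x)" for n
  have bound: "l1_norm M (\<lambda>x. S t h x - h x - t * g x) \<le> c n" for n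
    using generator_defect_split[OF f h t _ g_def osc, of "1 / 2 ^ n" "nat \<lfloor>t * 2 ^ n\<rfloor>"] T
    by (simp add: c_def T_def dyadic_resolvent_def g_def)
  have T_tendsto: "(\<lambda>n. t - T n) \<longlonglongrightarrow> 0"
  proof (rule tendsto_sandwich[OF _ _ tendsto_const])
    show "\<forall>\<^sub>F n in sequentially. 0 \<le> t - T n" using T by simp
    show "\<forall>\<^sub>F n in sequentially. t - T n \<le> (1/2) ^ n"
      using T by (simp add: less_imp_le power_one_over)
    show "(\<lambda>n. (1/2::real) ^ n) \<longlonglongrightarrow> 0" by (rule LIMSEQ_realpow_zero) auto
  qed
  have S_tendsto: "(\<lambda>n. l1_dist M (S (t - T n) h) h) \<longlonglongrightarrow> 0"
  proof (rule LIMSEQ_I)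
    fix r :: real assume "0 < r"
    obtain \<eta> where \<eta>: "0 < \<eta>" "\<And>s. 0 \<le> s \<Longrightarrow> s < \<eta> \<Longrightarrow> l1_dist M (S s h) h < r"
      using S_strongly_continuous[OF h \<open>0 < r\<close>] by auto
    obtain N where "\<forall>n\<ge>N. norm (t - T n - 0) < \<eta>"
      using LIMSEQ_D[OF T_tendsto \<eta>(1)] by auto
    then show "\<exists>N. \<forall>n\<ge>N. norm (l1_dist M (S (t - T n) h) h - 0) < r"
      using \<eta>(2) T l1_dist_nonneg by (metis abs_of_nonneg diff_ge_0_iff_ge diff_zero real_norm_def)
  qed
  have "(\<lambda>n. T n) \<longlonglongrightarrow> t"
    using tendsto_diff[OF tendsto_const[of t] T_tendsto] by simp
  then have "c \<longlonglongrightarrow> t * (lam * 0 + e) + 2 * 0 + 0 + 0 * l1_norm M (\<lambda>x. lam * h x - f x)"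
    unfolding c_def by (intro tendsto_intros conv S_tendsto T_tendsto)
  then show ?thesis
    using bound by (intro LIMSEQ_le_const) auto
qed

lemma resolvent_equation_solvable:
  assumes f: "integrable M f"
  shows "\<exists>h. generator M S h (\<lambda>x. lam * h x - f x)"
proof -
  obtain h where h: "integrable M h" and conv: "(\<lambda>n. l1_dist M (dyadic_resolvent f n) h) \<longlonglongrightarrow> 0"
    using dyadic_resolvent_convergent[OF f] by auto
  define g where "g = (\<lambda>x. lam * h x - f x)"
  have int_g: "integrable M g" unfolding g_def using h f by auto
  have "((\<lambda>t. l1_dist M (\<lambda>x. (S t h x - h x) / t) g) \<longlongrightarrow> 0) (at_right 0)"
  proof (rule tendstoI)
    fix e :: real assume e: "0 < e"
    obtain \<eta> where \<eta>: "0 < \<eta>" "\<And>r. 0 \<le> r \<Longrightarrow> r < \<eta> \<Longrightarrow> l1_dist M (S r g) g < e / 2"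
      using S_strongly_continuous[OF int_g, of "e/2"] e by auto
    have "dist (l1_dist M (\<lambda>x. (S t h x - h x) / t) g) 0 < e" if t: "0 < t" "t < \<eta>" for t
    proof -
      have "l1_dist M (\<lambda>x. (S t h x - h x) / t) g = (1/t) * l1_norm M (\<lambda>x. S t h x - h x - t * g x)"
        using t l1_norm_cmult[of M "1/t" "\<lambda>x. S t h x - h x - t * g x"]
        by (simp add: l1_dist_eq_l1_norm field_simps)
      also have "\<dots> \<le> (1/t) * (t * (e/2))"
      proof (intro mult_left_mono generator_defect_le[OF f h conv g_def])
        fix r assume "0 \<le> r" "r \<le> t"
        then show "l1_dist M (S r g) g \<le> e / 2"
          using \<eta>(2)[of r] t by simp
      qed (use t in auto)
      also have "\<dots> < e" using t e by simp
      finally show ?thesis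
        using l1_dist_nonneg[of M "\<lambda>x. (S t h x - h x) / t" g] by simp
    qed
    then show "\<forall>\<^sub>F t in at_right 0. dist (l1_dist M (\<lambda>x. (S t h x - h x) / t) g) 0 < e"
      unfolding eventually_at_right_field using \<eta>(1) by blast
  qed
  then have "generator M S h g"
    unfolding generator_def l1_def using h int_g by simp
  then show ?thesis unfolding g_def by blast
qed

end

section \<open>The resolvent\<close>

context substochastic_sg
begin

lemma resolvent_generator:
  assumes lam: "0 < lam" and f: "integrable M f"
  shows "generator M S (resolvent M S lam f) (\<lambda>x. lam * resolvent M S lam f x - f x)"
proof -
  interpret resolvent_construction M S lam
    by unfold_locales (rule lam)
  show ?thesis
    unfolding resolvent_def by (rule someI_ex[OF resolvent_equation_solvable[OF f]])
qed

lemma integrable_resolvent: "0 < lam \<Longrightarrow> integrable M f \<Longrightarrow> integrable M (resolvent M S lam f)"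
  using resolvent_generator generator_integrable by blast

lemma resolvent_unique:
  assumes "0 < lam" "integrable M f" "generator M S h (\<lambda>x. lam * h x - f x)"
  shows "AE x in M. h x = resolvent M S lam f x"
  using generator_resolvent_equation_unique[OF assms(1,3) resolvent_generator[OF assms(1,2)]] .

lemma resolvent_nonneg:
  assumes "0 < lam" "integrable M f" "AE x in M. 0 \<le> f x"
  shows "AE x in M. 0 \<le> resolvent M S lam f x"
  by (rule generator_resolvent_equation_nonneg[OF assms resolvent_generator[OF assms(1,2)]])

lemma resolvent_lincomb:
  assumes lam: "0 < lam" and f: "integrable M f" and g: "integrable M g"
  shows "AE x in M. resolvent M S lam (\<lambda>y. a * f y + b * g y) x
    = a * resolvent M S lam f x + b * resolvent M S lam g x"
proof -
  have "generator M S (\<lambda>x. a * resolvent M S lam f x + b * resolvent M S lam g x)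
     (\<lambda>x. a * (lam * resolvent M S lam f x - f x) + b * (lam * resolvent M S lam g x - g x))"
    by (rule generator_lincomb[OF resolvent_generator[OF lam f] resolvent_generator[OF lam g]])
  then have "generator M S (\<lambda>x. a * resolvent M S lam f x + b * resolvent M S lam g x)
     (\<lambda>x. lam * (a * resolvent M S lam f x + b * resolvent M S lam g x) - (a * f x + b * g x))"
    by (rule generator_cong_AE) (use integrable_resolvent[OF lam] f g in \<open>auto simp: algebra_simps\<close>)
  from resolvent_unique[OF lam _ this] f g show ?thesis
    by (auto elim: eventually_mono)
qed

lemma resolvent_cong_AE:
  assumes lam: "0 < lam" and f: "integrable M f" and g: "integrable M g" and "AE x in M. f x = g x"
  shows "AE x in M. resolvent M S lam f x = resolvent M S lam g x"
proof -
  have "generator M S (resolvent M S lam f) (\<lambda>x. lam * resolvent M S lam f x - g x)"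
    by (rule generator_cong_AE[OF resolvent_generator[OF lam f]])
       (use integrable_resolvent[OF lam f] g assms(4) in auto)
  from resolvent_unique[OF lam g this] show ?thesis .
qed

text \<open>By the resolvent identity \<open>R(mu) f = R(lam) (f + (lam - mu) R(mu) f)\<close>.\<close>

lemma resolvent_antimono:
  assumes mu: "0 < mu" "mu \<le> lam" and f: "integrable M f" "AE x in M. 0 \<le> f x"
  shows "AE x in M. resolvent M S lam f x \<le> resolvent M S mu f x"
proof -
  have lam: "0 < lam" using mu by simp
  define h where "h = resolvent M S mu f"
  have int_h: "integrable M h" unfolding h_def using integrable_resolvent mu f by auto
  define F where "F = (\<lambda>y. 1 * f y + (lam - mu) * h y)"
  have int_F: "integrable M F" unfolding F_def using int_h f by auto
  have "generator M S h (\<lambda>x. lam * h x - F x)"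
    unfolding h_def F_def
    by (rule generator_cong_AE[OF resolvent_generator[OF mu(1) f(1)]])
       (use int_h int_F f(1) in \<open>auto simp: h_def F_def algebra_simps\<close>)
  then have "AE x in M. h x = resolvent M S lam F x"
    by (rule resolvent_unique[OF lam int_F])
  moreover have "AE x in M. resolvent M S lam F x
      = 1 * resolvent M S lam f x + (lam - mu) * resolvent M S lam h x"
    unfolding F_def by (rule resolvent_lincomb[OF lam f(1) int_h])
  moreover have "AE x in M. 0 \<le> resolvent M S lam h x"
    by (rule resolvent_nonneg[OF lam int_h]) (use resolvent_nonneg mu f in \<open>simp add: h_def\<close>)
  ultimately show ?thesis
    unfolding h_def by eventually_elim (use mu in \<open>auto intro: mult_nonneg_nonneg\<close>)
qed

text \<open>The integral form of \<open>d/ds \<integral> S s h = \<integral> S s k\<close> over one step, for \<open>generator M S h k\<close>.\<close>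

lemma integral_S_generator_step:
  assumes g: "generator M S h k" and r: "0 \<le> r" and s: "0 < s"
  shows "\<bar>(\<integral>x. S r h x \<partial>M) - (\<integral>x. S (r + s) h x \<partial>M) + s * (\<integral>x. S r k x \<partial>M)\<bar>
      \<le> s * l1_dist M (\<lambda>x. (S s h x - h x) / s) k"
proof -
  have int: "integrable M h" "integrable M k" using generator_integrable g by auto
  have s0: "0 \<le> s" using s by simp
  define e where "e = (\<lambda>x. h x - S s h x + s * k x)"
  have int_Sh: "integrable M (S s h)" using integrable_S s0 int by auto
  have int_e: "integrable M e" unfolding e_def using int_Sh int by auto
  have "e = (\<lambda>x. (- s) * ((S s h x - h x) / s - k x))"
    unfolding e_def using s by (auto simp: field_simps)
  then have norm_e: "l1_norm M e = s * l1_dist M (\<lambda>x. (S s h x - h x) / s) k"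
    using l1_norm_cmult[of M "- s" "\<lambda>x. (S s h x - h x) / s - k x"] s by (simp add: l1_dist_eq_l1_norm)
  have int_S: "integrable M (S r h)" "integrable M (S (r + s) h)" "integrable M (S r k)" "integrable M (S r e)"
    using integrable_S r s0 int int_e by auto
  have eq: "(\<lambda>x. h x - S s h x) = (\<lambda>x. (- s) * k x + 1 * e x)"
    unfolding e_def by auto
  have "AE x in M. S (r + s) h x = S r (S s h) x"
    by (rule S_add[OF r s0 int(1)])
  moreover have "AE x in M. S r (\<lambda>x. (- s) * k x + 1 * e x) x = S r h x - S r (S s h) x"
    using S_diff[OF r int(1) int_Sh] unfolding eq .
  moreover have "AE x in M. S r (\<lambda>x. (- s) * k x + 1 * e x) x = (- s) * S r k x + 1 * S r e x"
    by (rule l1_linear_lincomb[OF l1_linear_S[OF r] int(2) int_e])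
  ultimately have "AE x in M. S r h x - S (r + s) h x = (- s) * S r k x + S r e x"
    by eventually_elim simp
  then have "(\<integral>x. S r h x - S (r + s) h x \<partial>M) = (\<integral>x. (- s) * S r k x + S r e x \<partial>M)"
    by (rule integral_cong_AE[rotated 2]) (use int_S in auto)
  then have "(\<integral>x. S r h x \<partial>M) - (\<integral>x. S (r + s) h x \<partial>M) + s * (\<integral>x. S r k x \<partial>M)
      = (\<integral>x. S r e x \<partial>M)"
    using int_S by simp
  moreover have "\<bar>\<integral>x. S r e x \<partial>M\<bar> \<le> l1_norm M e"
    using abs_integral_le_l1_norm[of M "S r e"] l1_norm_S_le[OF r int_e] by linarith
  ultimately show ?thesis
    unfolding norm_e by simp
qed

end

section \<open>The perturbation $P \varphi R(\lambda)$\<close>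

locale kernel_perturbation = substochastic_sg M S
  for M :: "'a measure" and S :: "real \<Rightarrow> ('a \<Rightarrow> real) \<Rightarrow> ('a \<Rightarrow> real)" +
  fixes P :: "('a \<Rightarrow> real) \<Rightarrow> ('a \<Rightarrow> real)" and \<phi> :: "'a \<Rightarrow> real"
  assumes P_stochastic: "stochastic M P"
    and \<phi>_measurable: "\<phi> \<in> borel_measurable M"
    and \<phi>_nonneg: "\<And>x. 0 \<le> \<phi> x"
    and domain_generator: "\<And>f g. generator M S f g \<Longrightarrow> integrable M (\<lambda>x. \<phi> x * \<bar>f x\<bar>)"
    and integral_generator: "\<And>f g. generator M S f g \<Longrightarrow> (AE x in M. 0 \<le> f x) \<Longrightarrow>
      (\<integral>x. g x \<partial>M) = - (\<integral>x. \<phi> x * f x \<partial>M)"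
begin

abbreviation R :: "real \<Rightarrow> ('a \<Rightarrow> real) \<Rightarrow> 'a \<Rightarrow> real" where
  "R lam \<equiv> resolvent M S lam"

abbreviation T :: "real \<Rightarrow> ('a \<Rightarrow> real) \<Rightarrow> 'a \<Rightarrow> real" where
  "T lam \<equiv> PphiR M P \<phi> S lam"

lemma T_def: "T lam f = P (\<lambda>x. \<phi> x * R lam f x)"
  by (simp add: PphiR_def)

lemma l1_linear_P: "l1_linear M P"
  using P_stochastic by (simp add: stochastic_def)

lemma integrable_\<phi>_resolvent:
  assumes lam: "0 < lam" and f: "integrable M f"
  shows "integrable M (\<lambda>x. \<phi> x * R lam f x)"
  using domain_generator[OF resolvent_generator[OF lam f]]
  by (rule Bochner_Integration.integrable_bound)
     (use \<phi>_measurable integrable_resolvent[OF lam f] \<phi>_nonneg in \<open>auto simp: abs_mult\<close>)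

lemma l1_linear_T:
  assumes lam: "0 < lam"
  shows "l1_linear M (T lam)"
  unfolding l1_linear_def l1_def
proof (intro conjI allI impI)
  fix f :: "'a \<Rightarrow> real" assume "integrable M f"
  then show "integrable M (T lam f)"
    unfolding T_def using l1_linear_integrable[OF l1_linear_P integrable_\<phi>_resolvent[OF lam]] by blast
next
  fix f g :: "'a \<Rightarrow> real" assume fg: "integrable M f \<and> integrable M g \<and> (AE x in M. f x = g x)"
  then have "AE x in M. R lam f x = R lam g x" using resolvent_cong_AE[OF lam] by blast
  then have "AE x in M. \<phi> x * R lam f x = \<phi> x * R lam g x" by eventually_elim simp
  then show "AE x in M. T lam f x = T lam g x"
    unfolding T_def using l1_linear_cong_AE[OF l1_linear_P integrable_\<phi>_resolvent[OF lam]
      integrable_\<phi>_resolvent[OF lam]] fg by blast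
next
  fix a b :: real and f g :: "'a \<Rightarrow> real" assume fg: "integrable M f \<and> integrable M g"
  have int: "integrable M (\<lambda>x. \<phi> x * R lam f x)" "integrable M (\<lambda>x. \<phi> x * R lam g x)"
    using integrable_\<phi>_resolvent[OF lam] fg by auto
  have int_comb: "integrable M (\<lambda>x. \<phi> x * R lam (\<lambda>y. a * f y + b * g y) x)"
    using integrable_\<phi>_resolvent[OF lam] fg by auto
  have "AE x in M. R lam (\<lambda>y. a * f y + b * g y) x = a * R lam f x + b * R lam g x"
    using resolvent_lincomb[OF lam] fg by blast
  then have "AE x in M. P (\<lambda>x. \<phi> x * R lam (\<lambda>y. a * f y + b * g y) x) x
      = P (\<lambda>y. a * (\<phi> y * R lam f y) + b * (\<phi> y * R lam g y)) x"
    by (intro l1_linear_cong_AE[OF l1_linear_P int_comb])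
       (use int in \<open>auto simp: algebra_simps elim!: eventually_mono\<close>)
  moreover have "AE x in M. P (\<lambda>y. a * (\<phi> y * R lam f y) + b * (\<phi> y * R lam g y)) x
      = a * P (\<lambda>x. \<phi> x * R lam f x) x + b * P (\<lambda>x. \<phi> x * R lam g x) x"
    by (rule l1_linear_lincomb[OF l1_linear_P int])
  ultimately show "AE x in M. T lam (\<lambda>y. a * f y + b * g y) x = a * T lam f x + b * T lam g x"
    unfolding T_def by eventually_elim simp
qed

lemma integrable_T: "0 < lam \<Longrightarrow> integrable M f \<Longrightarrow> integrable M (T lam f)"
  using l1_linear_T l1_linear_integrable by blast

lemma T_nonneg_and_integral:
  assumes lam: "0 < lam" and f: "integrable M f" "AE x in M. 0 \<le> f x"
  shows "AE x in M. 0 \<le> T lam f x" "(\<integral>x. T lam f x \<partial>M) = (\<integral>x. \<phi> x * R lam f x \<partial>M)"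
proof -
  have "AE x in M. 0 \<le> \<phi> x * R lam f x"
    using resolvent_nonneg[OF lam f] by eventually_elim (simp add: \<phi>_nonneg)
  from stochastic_preserves_integral[OF P_stochastic integrable_\<phi>_resolvent[OF lam f(1)] this]
  show "AE x in M. 0 \<le> T lam f x" "(\<integral>x. T lam f x \<partial>M) = (\<integral>x. \<phi> x * R lam f x \<partial>M)"
    unfolding T_def .
qed

lemma resolvent_mass_balance:
  assumes lam: "0 < lam" and f: "integrable M f" "AE x in M. 0 \<le> f x"
  shows "lam * (\<integral>x. R lam f x \<partial>M) = (\<integral>x. f x \<partial>M) - (\<integral>x. T lam f x \<partial>M)"
proof -
  have "(\<integral>x. lam * R lam f x - f x \<partial>M) = - (\<integral>x. \<phi> x * R lam f x \<partial>M)"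
    by (rule integral_generator[OF resolvent_generator[OF lam f(1)] resolvent_nonneg[OF lam f]])
  moreover have "(\<integral>x. lam * R lam f x - f x \<partial>M) = lam * (\<integral>x. R lam f x \<partial>M) - (\<integral>x. f x \<partial>M)"
    using integrable_resolvent[OF lam f(1)] f by simp
  ultimately show ?thesis
    using T_nonneg_and_integral(2)[OF lam f] by simp
qed

lemma substochastic_T:
  assumes lam: "0 < lam"
  shows "substochastic M (T lam)"
proof (rule substochasticI[OF l1_linear_T[OF lam]])
  fix f :: "'a \<Rightarrow> real" assume f: "integrable M f" "AE x in M. 0 \<le> f x"
  then show "AE x in M. 0 \<le> T lam f x"
    by (rule T_nonneg_and_integral(1)[OF lam])
  have "0 \<le> lam * (\<integral>x. R lam f x \<partial>M)"
    using lam integral_nonneg_AE[OF resolvent_nonneg[OF lam f]] by simp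
  then show "(\<integral>x. T lam f x \<partial>M) \<le> (\<integral>x. f x \<partial>M)"
    using resolvent_mass_balance[OF lam f] by simp
qed

lemma T_antimono:
  assumes mu: "0 < mu" "mu \<le> lam" and f: "integrable M f" "AE x in M. 0 \<le> f x"
  shows "AE x in M. T lam f x \<le> T mu f x"
proof -
  have "AE x in M. \<phi> x * R lam f x \<le> \<phi> x * R mu f x"
    using resolvent_antimono[OF mu f] by eventually_elim (simp add: mult_left_mono \<phi>_nonneg)
  then show ?thesis
    unfolding T_def using mu
    by (intro substochastic_mono[OF stochastic_imp_substochastic[OF P_stochastic]]
        integrable_\<phi>_resolvent f) auto
qed

lemma T_fixed_point_eq_0:
  assumes lam: "0 < lam" and g: "integrable M g" "AE x in M. 0 \<le> g x"
    and fixed: "AE x in M. T lam g x = g x"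
  shows "AE x in M. g x = 0"
proof -
  have "(\<integral>x. T lam g x \<partial>M) = (\<integral>x. g x \<partial>M)"
    by (rule integral_cong_AE) (use fixed integrable_T[OF lam g(1)] g(1) in auto)
  then have "(\<integral>x. R lam g x \<partial>M) = 0"
    using resolvent_mass_balance[OF lam g] lam by simp
  then have "AE x in M. R lam g x = 0"
    using integral_nonneg_eq_0_iff_AE[OF integrable_resolvent[OF lam g(1)] resolvent_nonneg[OF lam g]]
    by simp
  then have "AE x in M. T lam g x = P (\<lambda>y. 0) x"
    unfolding T_def
    by (intro l1_linear_cong_AE[OF l1_linear_P integrable_\<phi>_resolvent[OF lam g(1)]])
       (auto elim: eventually_mono)
  with l1_linear_zero[OF l1_linear_P] fixed show ?thesis
    by eventually_elim simp
qed

lemma resolvent_partial_sum_mass: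
  assumes lam: "0 < lam" and f: "integrable M f" "AE x in M. 0 \<le> f x"
  shows "lam * (\<integral>x. R lam (\<lambda>y. \<Sum>k\<le>n. (T lam ^^ k) f y) x \<partial>M)
    = (\<integral>x. f x \<partial>M) - (\<integral>x. (T lam ^^ Suc n) f x \<partial>M)"
proof -
  define u where "u = (\<lambda>y. \<Sum>k\<le>n. (T lam ^^ k) f y)"
  define c where "c k = (\<integral>x. (T lam ^^ k) f x \<partial>M)" for k
  note Tk = substochastic_funpow[OF substochastic_T[OF lam]]
  have int_Tk: "integrable M ((T lam ^^ k) f)" for k
    using substochastic_integrable[OF Tk f(1)] .
  have int_u: "integrable M u" unfolding u_def using int_Tk by auto
  have "AE x in M. \<forall>k. 0 \<le> (T lam ^^ k) f x"
    unfolding AE_all_countable using substochastic_nonneg[OF Tk f] by blast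
  then have u_nonneg: "AE x in M. 0 \<le> u x"
    unfolding u_def by eventually_elim (auto intro: sum_nonneg)
  have "AE x in M. T lam u x = (\<Sum>k\<le>n. T lam ((T lam ^^ k) f) x)"
    unfolding u_def by (rule l1_linear_sum[OF l1_linear_T[OF lam]]) (use int_Tk in auto)
  then have "(\<integral>x. T lam u x \<partial>M) = (\<integral>x. (\<Sum>k\<le>n. (T lam ^^ Suc k) f x) \<partial>M)"
    by (intro integral_cong_AE) (use integrable_T[OF lam int_u] integrable_T[OF lam int_Tk] in auto)
  also have "\<dots> = (\<Sum>k\<le>n. c (Suc k))"
    unfolding c_def by (rule Bochner_Integration.integral_sum) (use integrable_T[OF lam int_Tk] in auto)
  moreover have "(\<integral>x. u x \<partial>M) = (\<Sum>k\<le>n. c k)"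
    unfolding u_def c_def by (rule Bochner_Integration.integral_sum) (use int_Tk in auto)
  ultimately have "lam * (\<integral>x. R lam u x \<partial>M) = (\<Sum>k\<le>n. c k) - (\<Sum>k\<le>n. c (Suc k))"
    using resolvent_mass_balance[OF lam int_u u_nonneg] by simp
  also have "\<dots> = (\<Sum>k\<le>n. c k - c (Suc k))"
    by (simp add: sum_subtractf)
  also have "\<dots> = c 0 - c (Suc n)"
    by (rule sum_telescope)
  finally show ?thesis
    by (simp add: u_def c_def)
qed

end

section \<open>Iterates of a subinvariant density\<close>

lemma integral_truncation_tendsto_0:
  assumes f: "integrable M f" "AE x in M. 0 \<le> f x"
    and w: "w \<in> borel_measurable M" "AE x in M. 0 < w x"
  shows "(\<lambda>N. \<integral>x. f x - min (f x) (real N * w x) \<partial>M) \<longlonglongrightarrow> 0"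
proof -
  have "(\<lambda>N. \<integral>x. f x - min (f x) (real N * w x) \<partial>M) \<longlonglongrightarrow> (\<integral>x. 0 \<partial>M)"
  proof (rule integral_dominated_convergence[where w = f])
    show "AE x in M. (\<lambda>N. f x - min (f x) (real N * w x)) \<longlonglongrightarrow> 0"
      using w(2)
    proof eventually_elim
      case (elim x)
      obtain K :: nat where K: "f x / w x < real K" using reals_Archimedean2 by blast
      have "f x - min (f x) (real N * w x) = 0" if "K \<le> N" for N
      proof -
        have "f x / w x < real N" using K that by (meson of_nat_le_iff order_less_le_trans)
        then show ?thesis using elim by (simp add: divide_less_eq)
      qed
      then show ?case
        by (intro tendsto_eventually) (auto simp: eventually_sequentially)
    qed
    show "AE x in M. norm (f x - min (f x) (real N * w x)) \<le> f x" for N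
      using f(2) w(2) by eventually_elim (auto simp: min_def)
  qed (use f w in auto)
  then show ?thesis by simp
qed

locale subinvariant_density = kernel_perturbation +
  fixes fstar :: "'a \<Rightarrow> real"
  assumes fstar_density: "is_density M fstar"
    and fstar_pos: "AE x in M. 0 < fstar x"
    and K_subinvariant: "\<exists>g. l1 M g \<and>
      ((\<lambda>l. l1_dist M (PphiR M P \<phi> S l fstar) g) \<longlongrightarrow> 0) (at_right 0) \<and>
      (AE x in M. g x \<le> fstar x)"
begin

lemma integrable_fstar: "integrable M fstar"
  using fstar_density by (simp add: is_density_def l1_def)

lemma fstar_nonneg: "AE x in M. 0 \<le> fstar x"
  using fstar_pos by (auto elim: eventually_mono)

text \<open>\<open>T lam fstar\<close> increases as \<open>lam \<down> 0\<close>, so it lies below its limit \<open>K fstar \<le> fstar\<close>.\<close>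

lemma T_fstar_le:
  assumes lam: "0 < lam"
  shows "AE x in M. T lam fstar x \<le> fstar x"
proof -
  obtain g where g: "integrable M g" "((\<lambda>l. l1_dist M (T l fstar) g) \<longlongrightarrow> 0) (at_right 0)"
    "AE x in M. g x \<le> fstar x"
    using K_subinvariant by (auto simp: l1_def)
  have "\<forall>\<^sub>F l in at_right 0. integrable M (T l fstar) \<and> (AE x in M. T lam fstar x \<le> T l fstar x)"
    unfolding eventually_at_right_field
    by (intro exI[of _ lam] conjI allI impI lam integrable_T integrable_fstar T_antimono fstar_nonneg) auto
  from AE_le_l1_limit[OF trivial_limit_at_right_real integrable_T[OF lam integrable_fstar] g(1) this g(2)]
  show ?thesis
    using g(3) by eventually_elim simp
qed

lemma integral_T_power_fstar_tendsto_0: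
  assumes lam: "0 < lam"
  shows "(\<lambda>n. \<integral>x. (T lam ^^ n) fstar x \<partial>M) \<longlonglongrightarrow> 0"
proof -
  define u where "u n = (T lam ^^ n) fstar" for n
  note T = substochastic_T[OF lam]
  have int_u: "integrable M (u n)" for n
    unfolding u_def using substochastic_integrable[OF substochastic_funpow[OF T] integrable_fstar] .
  have u_nonneg: "AE x in M. 0 \<le> u n x" for n
    unfolding u_def using substochastic_nonneg[OF substochastic_funpow[OF T] integrable_fstar fstar_nonneg] .
  have u_Suc: "u (Suc n) = T lam (u n)" for n
    by (simp add: u_def)
  have u_dec: "AE x in M. u (Suc n) x \<le> u n x" for n
  proof (induction n)
    case 0
    show ?case using T_fstar_le[OF lam] by (simp add: u_def)
  next
    case (Suc n)
    from substochastic_mono[OF T int_u[of "Suc n"] int_u[of n] Suc] show ?case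
      by (simp only: u_Suc)
  qed
  obtain g where g: "integrable M g" "(\<lambda>n. l1_dist M (u n) g) \<longlonglongrightarrow> 0"
    using l1_convergent_decseq[of M u, OF int_u u_nonneg u_dec] by blast
  have g_nonneg: "AE x in M. 0 \<le> g x"
    by (rule AE_le_l1_limit[of sequentially M "\<lambda>x. 0" g u]) (use g int_u u_nonneg in auto)
  have "(\<lambda>n. l1_dist M (u (Suc n)) (T lam g)) \<longlonglongrightarrow> 0"
    unfolding u_Suc by (rule l1_tendsto_substochastic[OF T int_u g(1) g(2)])
  then have "AE x in M. T lam g x = g x"
    by (rule l1_limit_unique[OF int_u integrable_T[OF lam g(1)] g(1) _ LIMSEQ_Suc[OF g(2)]])
  then have "AE x in M. g x = 0"
    by (rule T_fixed_point_eq_0[OF lam g(1) g_nonneg])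
  then have "(\<integral>x. g x \<partial>M) = 0"
    by (rule integral_eq_zero_AE)
  with l1_tendsto_integral[OF int_u g] show ?thesis
    by (simp add: u_def)
qed

lemma integral_T_power_le:
  assumes lam: "0 < lam" and f: "integrable M f" "AE x in M. 0 \<le> f x"
  shows "(\<integral>x. (T lam ^^ n) f x \<partial>M)
    \<le> real N * (\<integral>x. (T lam ^^ n) fstar x \<partial>M) + (\<integral>x. f x - min (f x) (real N * fstar x) \<partial>M)"
proof -
  define Tn where "Tn = T lam ^^ n"
  have Tn: "substochastic M Tn"
    unfolding Tn_def by (rule substochastic_funpow[OF substochastic_T[OF lam]])
  note L = substochastic_l1_linear[OF Tn]
  define m where "m = (\<lambda>x. min (f x) (real N * fstar x))"
  define r where "r = (\<lambda>x. f x - m x)"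
  have int: "integrable M m" "integrable M r" "integrable M (\<lambda>x. real N * fstar x)"
    unfolding m_def r_def using f integrable_fstar by auto
  have r_nonneg: "AE x in M. 0 \<le> r x" by (auto simp: r_def m_def)
  have "f = (\<lambda>x. m x + r x)" by (auto simp: r_def)
  then have "AE x in M. Tn f x = Tn m x + Tn r x"
    using l1_linear_add[OF L int(1,2)] by simp
  moreover have "AE x in M. Tn m x \<le> Tn (\<lambda>x. real N * fstar x) x"
    by (rule substochastic_mono[OF Tn int(1) int(3)]) (auto simp: m_def)
  moreover have "AE x in M. Tn (\<lambda>x. real N * fstar x) x = real N * Tn fstar x"
    by (rule l1_linear_cmult[OF L integrable_fstar])
  ultimately have "AE x in M. Tn f x \<le> real N * Tn fstar x + Tn r x"
    by eventually_elim simp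
  then have "(\<integral>x. Tn f x \<partial>M) \<le> (\<integral>x. real N * Tn fstar x + Tn r x \<partial>M)"
    by (rule integral_mono_AE[rotated 2])
       (use l1_linear_integrable[OF L] f integrable_fstar int in auto)
  also have "\<dots> = real N * (\<integral>x. Tn fstar x \<partial>M) + (\<integral>x. Tn r x \<partial>M)"
    using l1_linear_integrable[OF L] integrable_fstar int by simp
  also have "(\<integral>x. Tn r x \<partial>M) \<le> (\<integral>x. r x \<partial>M)"
    by (rule substochastic_integral_le[OF Tn int(2) r_nonneg])
  finally show ?thesis
    by (simp add: Tn_def r_def m_def)
qed

lemma integral_T_power_tendsto_0:
  assumes lam: "0 < lam" and f: "integrable M f" "AE x in M. 0 \<le> f x"
  shows "(\<lambda>n. \<integral>x. (T lam ^^ n) f x \<partial>M) \<longlonglongrightarrow> 0"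
proof (rule LIMSEQ_I)
  fix e :: real assume e: "0 < e"
  obtain N where N: "norm ((\<integral>x. f x - min (f x) (real N * fstar x) \<partial>M) - 0) < e / 2"
    using LIMSEQ_D[OF integral_truncation_tendsto_0[OF f _ fstar_pos], of "e/2"] integrable_fstar e
    by auto
  have "(\<lambda>n. real N * (\<integral>x. (T lam ^^ n) fstar x \<partial>M)) \<longlonglongrightarrow> real N * 0"
    by (intro tendsto_mult tendsto_const integral_T_power_fstar_tendsto_0[OF lam])
  then obtain n0 where n0: "\<forall>n\<ge>n0. norm (real N * (\<integral>x. (T lam ^^ n) fstar x \<partial>M) - 0) < e / 2"
    using LIMSEQ_D[of _ 0 "e/2"] e by force
  show "\<exists>no. \<forall>n\<ge>no. norm ((\<integral>x. (T lam ^^ n) f x \<partial>M) - 0) < e"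
  proof (intro exI[of _ n0] allI impI)
    fix n assume "n0 \<le> n"
    have "0 \<le> (\<integral>x. (T lam ^^ n) f x \<partial>M)"
      by (rule integral_nonneg_AE[OF substochastic_nonneg[OF substochastic_funpow[OF substochastic_T[OF lam]] f]])
    then show "norm ((\<integral>x. (T lam ^^ n) f x \<partial>M) - 0) < e"
      using integral_T_power_le[OF lam f, of n N] N n0 \<open>n0 \<le> n\<close> by auto
  qed
qed

end

section \<open>The minimal semigroup is stochastic\<close>

text \<open>A discrete Gronwall inequality: summing the increments over a fine grid of \<open>[0, r]\<close>.\<close>

lemma right_increment_bound_le:
  fixes F :: "real \<Rightarrow> real"
  assumes F0: "F 0 = 0" and bound: "\<And>r. 0 \<le> r \<Longrightarrow> r \<le> a \<Longrightarrow> F r \<le> B" and lam: "0 \<le> lam"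
    and growth: "\<And>e. 0 < e \<Longrightarrow> \<exists>\<eta>>0. \<forall>r s. 0 \<le> r \<longrightarrow> 0 < s \<longrightarrow> s < \<eta> \<longrightarrow> r + s \<le> a \<longrightarrow>
      F (r + s) - F r \<le> s * lam * F r + s * e"
    and r: "0 \<le> r" "r \<le> a"
  shows "F r \<le> r * lam * B"
proof (cases "r = 0")
  case True
  then show ?thesis using F0 by simp
next
  case False
  then have r_pos: "0 < r" using r by simp
  show ?thesis
  proof (rule field_le_epsilon)
    fix e :: real assume e: "0 < e"
    define \<epsilon> where "\<epsilon> = e / r"
    obtain \<eta> where \<eta>: "0 < \<eta>" "\<And>x y. 0 \<le> x \<Longrightarrow> 0 < y \<Longrightarrow> y < \<eta> \<Longrightarrow> x + y \<le> a \<Longrightarrow>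
        F (x + y) - F x \<le> y * lam * F x + y * \<epsilon>"
      using growth[of \<epsilon>] e r_pos unfolding \<epsilon>_def by auto
    obtain n :: nat where n: "r / \<eta> < real n" using reals_Archimedean2 by blast
    then have n_pos: "0 < n" using r_pos \<eta>(1) by (cases n) (auto simp: field_simps)
    define s where "s = r / real n"
    have s: "0 < s" "s < \<eta>" "real n * s = r"
      unfolding s_def using r_pos n n_pos \<eta>(1) by (auto simp: field_simps)
    have step: "F (real (Suc i) * s) - F (real i * s) \<le> s * lam * B + s * \<epsilon>" if "i < n" for i
    proof -
      have "real i * s + s = real (Suc i) * s" by (simp add: algebra_simps)
      also have "\<dots> \<le> real n * s" using that s by (intro mult_right_mono) auto
      finally have i: "0 \<le> real i * s" "real i * s + s \<le> a"
        using s r by auto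
      have "F (real i * s + s) - F (real i * s) \<le> s * lam * F (real i * s) + s * \<epsilon>"
        using \<eta>(2)[OF i(1) s(1,2) i(2)] .
      also have "\<dots> \<le> s * lam * B + s * \<epsilon>"
        using bound[OF i(1)] i s lam by (intro add_mono mult_left_mono) auto
      finally show ?thesis by (simp add: algebra_simps)
    qed
    have "F r = (\<Sum>i<n. F (real (Suc i) * s) - F (real i * s))"
      using sum_lessThan_telescope[of "\<lambda>i. F (real i * s)" n] F0 s(3) by simp
    also have "\<dots> \<le> (\<Sum>i<n. s * lam * B + s * \<epsilon>)"
      by (rule sum_mono) (use step in auto)
    also have "\<dots> = r * lam * B + e"
      using r_pos s(1) n_pos by (simp add: \<epsilon>_def algebra_simps flip: s(3))
    finally show "F r \<le> r * lam * B + e" .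
  qed
qed

text \<open>On an interval short enough that \<open>lam a < 1\<close>, the bound of the previous lemma improves the
  supremum of \<open>F\<close> by the factor \<open>lam a\<close>, so the supremum is \<open>0\<close>.\<close>

lemma right_increment_bound_imp_eq_0:
  fixes F :: "real \<Rightarrow> real"
  assumes F0: "F 0 = 0" and nonneg: "\<And>r. 0 \<le> r \<Longrightarrow> r \<le> a \<Longrightarrow> 0 \<le> F r"
    and bdd: "bdd_above (F ` {0..a})" and lam: "0 \<le> lam" "lam * a < 1"
    and growth: "\<And>e. 0 < e \<Longrightarrow> \<exists>\<eta>>0. \<forall>r s. 0 \<le> r \<longrightarrow> 0 < s \<longrightarrow> s < \<eta> \<longrightarrow> r + s \<le> a \<longrightarrow>
      F (r + s) - F r \<le> s * lam * F r + s * e"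
    and r: "0 \<le> r" "r \<le> a"
  shows "F r = 0"
proof -
  define Mx where "Mx = Sup (F ` {0..a})"
  have F_le: "F r \<le> Mx" if "0 \<le> r" "r \<le> a" for r
    unfolding Mx_def by (rule cSup_upper) (use that bdd in auto)
  have Mx_nonneg: "0 \<le> Mx" using F_le[of 0] F0 r by simp
  have "Mx \<le> lam * a * Mx"
    unfolding Mx_def
  proof (rule cSup_least)
    show "F ` {0..a} \<noteq> {}" using r by auto
    fix y assume "y \<in> F ` {0..a}"
    then obtain r where r: "0 \<le> r" "r \<le> a" "y = F r" by auto
    have "F r \<le> r * lam * Mx"
      by (rule right_increment_bound_le[OF F0 F_le lam(1) growth r(1,2)])
    also have "\<dots> \<le> a * lam * Mx" using r lam Mx_nonneg by (intro mult_right_mono) auto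
    finally show "y \<le> lam * a * Sup (F ` {0..a})" using r by (simp add: Mx_def algebra_simps)
  qed
  then have "(1 - lam * a) * Mx \<le> 0"
    by (simp add: algebra_simps)
  then have "Mx \<le> 0"
    using lam by (simp add: mult_le_0_iff)
  then show ?thesis
    using F_le[OF r] nonneg[OF r] by simp
qed

locale minimal_semigroup = subinvariant_density +
  fixes Pt :: "real \<Rightarrow> ('a \<Rightarrow> real) \<Rightarrow> ('a \<Rightarrow> real)"
  assumes Pt_semigroup: "substochastic_semigroup M Pt"
    and resolvent_Pt: "\<And>l f. 0 < l \<Longrightarrow> l1 M f \<Longrightarrow>
      ((\<lambda>n. l1_dist M (resolvent M S l (\<lambda>x. \<Sum>k\<le>n. ((PphiR M P \<phi> S l) ^^ k) f x))
        (resolvent M Pt l f)) \<longlonglongrightarrow> 0)"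
begin

sublocale Pt: substochastic_sg M Pt
  by unfold_locales (rule Pt_semigroup)

lemma resolvent_Pt_nonneg_and_mass:
  assumes lam: "0 < lam" and f: "integrable M f" "AE x in M. 0 \<le> f x"
  shows "AE x in M. 0 \<le> resolvent M Pt lam f x"
    and "lam * (\<integral>x. resolvent M Pt lam f x \<partial>M) = (\<integral>x. f x \<partial>M)"
proof -
  define u where "u n = (\<lambda>x. \<Sum>k\<le>n. (T lam ^^ k) f x)" for n
  note Tk = substochastic_funpow[OF substochastic_T[OF lam]]
  have int_u: "integrable M (u n)" for n
    unfolding u_def using substochastic_integrable[OF Tk f(1)] by auto
  have "AE x in M. \<forall>k. 0 \<le> (T lam ^^ k) f x"
    unfolding AE_all_countable using substochastic_nonneg[OF Tk f] by blast
  then have u_nonneg: "AE x in M. 0 \<le> u n x" for n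
    unfolding u_def by eventually_elim (auto intro: sum_nonneg)
  have lim: "(\<lambda>n. l1_dist M (R lam (u n)) (resolvent M Pt lam f)) \<longlonglongrightarrow> 0"
    using resolvent_Pt[OF lam] f(1) unfolding u_def l1_def by blast
  have int_R: "integrable M (R lam (u n))" for n using integrable_resolvent[OF lam int_u] .
  have int_RPt: "integrable M (resolvent M Pt lam f)" using Pt.integrable_resolvent[OF lam f(1)] .
  show "AE x in M. 0 \<le> resolvent M Pt lam f x"
    by (rule AE_le_l1_limit[of sequentially M "\<lambda>x. 0" _ "\<lambda>n. R lam (u n)"])
       (use int_R int_RPt lim resolvent_nonneg[OF lam int_u u_nonneg] in auto)
  have "(\<lambda>n. (\<integral>x. f x \<partial>M) - (\<integral>x. (T lam ^^ Suc n) f x \<partial>M)) \<longlonglongrightarrow> (\<integral>x. f x \<partial>M) - 0"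
    by (intro tendsto_diff tendsto_const LIMSEQ_Suc[OF integral_T_power_tendsto_0[OF lam f]])
  then have "(\<lambda>n. lam * (\<integral>x. R lam (u n) x \<partial>M)) \<longlonglongrightarrow> (\<integral>x. f x \<partial>M)"
    by (simp add: u_def resolvent_partial_sum_mass[OF lam f])
  moreover have "(\<lambda>n. lam * (\<integral>x. R lam (u n) x \<partial>M)) \<longlonglongrightarrow> lam * (\<integral>x. resolvent M Pt lam f x \<partial>M)"
    by (intro tendsto_mult tendsto_const l1_tendsto_integral[OF int_R int_RPt lim])
  ultimately show "lam * (\<integral>x. resolvent M Pt lam f x \<partial>M) = (\<integral>x. f x \<partial>M)"
    using LIMSEQ_unique by blast
qed

lemma integral_Pt_resolvent_step:
  assumes lam: "0 < lam" and f: "integrable M f" "AE x in M. 0 \<le> f x"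
    and g: "generator M Pt h (\<lambda>x. lam * h x - f x)" and mass: "lam * (\<integral>x. h x \<partial>M) = (\<integral>x. f x \<partial>M)"
    and r: "0 \<le> r" and s: "0 < s"
  shows "(\<integral>x. Pt r h x \<partial>M) - (\<integral>x. Pt (r + s) h x \<partial>M)
     \<le> s * lam * ((\<integral>x. h x \<partial>M) - (\<integral>x. Pt r h x \<partial>M))
       + s * l1_dist M (\<lambda>x. (Pt s h x - h x) / s) (\<lambda>x. lam * h x - f x)"
proof -
  have int_h: "integrable M h" using Pt.generator_integrable g by auto
  define k where "k = (\<lambda>x. lam * h x - f x)"
  have "AE x in M. Pt r k x = lam * Pt r h x + (-1) * Pt r f x"
    using l1_linear_lincomb[OF Pt.l1_linear_S[OF r] int_h f(1), of lam "-1"] by (simp add: k_def)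
  then have "(\<integral>x. Pt r k x \<partial>M) = (\<integral>x. lam * Pt r h x + (-1) * Pt r f x \<partial>M)"
    by (rule integral_cong_AE[rotated 2]) (use Pt.integrable_S r int_h f(1) in \<open>auto simp: k_def\<close>)
  also have "\<dots> = lam * (\<integral>x. Pt r h x \<partial>M) - (\<integral>x. Pt r f x \<partial>M)"
    using Pt.integrable_S r int_h f(1) by simp
  finally have "- (\<integral>x. Pt r k x \<partial>M) \<le> lam * ((\<integral>x. h x \<partial>M) - (\<integral>x. Pt r h x \<partial>M))"
    using substochastic_integral_le[OF Pt.substochastic_S[OF r] f] mass by (simp add: algebra_simps)
  then have "s * (- (\<integral>x. Pt r k x \<partial>M)) \<le> s * (lam * ((\<integral>x. h x \<partial>M) - (\<integral>x. Pt r h x \<partial>M)))"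
    using s by (intro mult_left_mono) auto
  then show ?thesis
    using Pt.integral_S_generator_step[OF g[folded k_def] r s] unfolding k_def by linarith
qed

text \<open>The deficit \<open>\<integral> h - \<integral> Pt r h \<ge> 0\<close> of \<open>h = resolvent M Pt lam f\<close> has right increments at most \<open>lam\<close>
  times itself.\<close>

lemma integral_Pt_resolvent:
  assumes lam: "0 < lam" "lam * a < 1" and f: "integrable M f" "AE x in M. 0 \<le> f x"
    and r: "0 \<le> r" "r \<le> a"
  shows "(\<integral>x. Pt r (resolvent M Pt lam f) x \<partial>M) = (\<integral>x. resolvent M Pt lam f x \<partial>M)"
proof -
  define h where "h = resolvent M Pt lam f"
  define k where "k = (\<lambda>x. lam * h x - f x)"
  have g: "generator M Pt h k"
    unfolding h_def k_def by (rule Pt.resolvent_generator[OF lam(1) f(1)])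
  have int_h: "integrable M h" using Pt.generator_integrable g by auto
  have h_nonneg: "AE x in M. 0 \<le> h x"
    unfolding h_def by (rule resolvent_Pt_nonneg_and_mass(1)[OF lam(1) f])
  have mass: "lam * (\<integral>x. h x \<partial>M) = (\<integral>x. f x \<partial>M)"
    unfolding h_def by (rule resolvent_Pt_nonneg_and_mass(2)[OF lam(1) f])
  define F where "F r = (\<integral>x. h x \<partial>M) - (\<integral>x. Pt r h x \<partial>M)" for r
  have F_nonneg: "0 \<le> F r" if "0 \<le> r" for r
    using substochastic_integral_le[OF Pt.substochastic_S[OF that] int_h h_nonneg] by (simp add: F_def)
  have "F r \<le> 2 * l1_norm M h" if "0 \<le> r" for r
    using abs_integral_le_l1_norm[of M "Pt r h"] Pt.l1_norm_S_le[OF that int_h]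
      l1_norm_eq_integral[OF int_h h_nonneg] by (simp add: F_def)
  then have bdd: "bdd_above (F ` {0..a})"
    by (auto intro!: bdd_aboveI[where M = "2 * l1_norm M h"])
  have F0: "F 0 = 0"
    using integral_cong_AE[OF _ _ Pt.S_0[OF int_h]] Pt.integrable_S[OF order_refl int_h] int_h
    by (simp add: F_def)
  have growth: "\<exists>\<eta>>0. \<forall>r s. 0 \<le> r \<longrightarrow> 0 < s \<longrightarrow> s < \<eta> \<longrightarrow> r + s \<le> a \<longrightarrow>
      F (r + s) - F r \<le> s * lam * F r + s * e" if "0 < e" for e
  proof -
    obtain \<eta> where \<eta>: "0 < \<eta>" "\<And>s. 0 < s \<Longrightarrow> s < \<eta> \<Longrightarrow> l1_dist M (\<lambda>x. (Pt s h x - h x) / s) k < e"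
      using Pt.generator_tendsto[OF g, THEN tendstoD, OF \<open>0 < e\<close>]
      unfolding eventually_at_right_field by (auto simp: l1_dist_nonneg)
    have "F (r + s) - F r \<le> s * lam * F r + s * e" if "0 \<le> r" "0 < s" "s < \<eta>" for r s
    proof -
      have "F (r + s) - F r \<le> s * lam * F r + s * l1_dist M (\<lambda>x. (Pt s h x - h x) / s) k"
        using integral_Pt_resolvent_step[OF lam(1) f g[unfolded k_def] mass that(1,2)]
        by (simp add: F_def k_def)
      also have "\<dots> \<le> s * lam * F r + s * e"
        using \<eta>(2)[OF that(2,3)] that(2) by (intro add_left_mono mult_left_mono) auto
      finally show ?thesis .
    qed
    with \<eta>(1) show ?thesis by blast
  qed
  have "F r = 0"
    by (rule right_increment_bound_imp_eq_0[OF F0 F_nonneg bdd less_imp_le[OF lam(1)] lam(2) growth r])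
  then show ?thesis
    by (simp add: F_def h_def)
qed

text \<open>Since \<open>\<integral> Pt t h\<close> is constant near \<open>t\<close>, its right derivative \<open>\<integral> Pt t (lam h - f)\<close> vanishes.\<close>

lemma integral_Pt:
  assumes t: "0 \<le> t" and f: "integrable M f" "AE x in M. 0 \<le> f x"
  shows "(\<integral>x. Pt t f x \<partial>M) = (\<integral>x. f x \<partial>M)"
proof -
  define lam where "lam = 1 / (2 * (t + 1))"
  have lam: "0 < lam" "lam * (t + 1) < 1" unfolding lam_def using t by auto
  define h where "h = resolvent M Pt lam f"
  define k where "k = (\<lambda>x. lam * h x - f x)"
  have g: "generator M Pt h k"
    unfolding h_def k_def by (rule Pt.resolvent_generator[OF lam(1) f(1)])
  have int_h: "integrable M h" using Pt.generator_integrable g by auto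
  have const: "(\<integral>x. Pt r h x \<partial>M) = (\<integral>x. h x \<partial>M)" if "0 \<le> r" "r \<le> t + 1" for r
    unfolding h_def by (rule integral_Pt_resolvent[OF lam f that])
  have "\<bar>\<integral>x. Pt t k x \<partial>M\<bar> \<le> e" if e: "0 < e" for e
  proof -
    obtain \<eta> where \<eta>: "0 < \<eta>" "\<And>s. 0 < s \<Longrightarrow> s < \<eta> \<Longrightarrow> l1_dist M (\<lambda>x. (Pt s h x - h x) / s) k < e"
      using Pt.generator_tendsto[OF g, THEN tendstoD, OF e]
      unfolding eventually_at_right_field by (auto simp: l1_dist_nonneg)
    define s where "s = min (\<eta> / 2) 1"
    have s: "0 < s" "s < \<eta>" "s \<le> 1" using \<eta>(1) by (auto simp: s_def)
    have "s * \<bar>\<integral>x. Pt t k x \<partial>M\<bar> \<le> s * e"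
      using Pt.integral_S_generator_step[OF g t s(1)] \<eta>(2)[OF s(1,2)] s const[of t] const[of "t + s"] t
      by (simp add: abs_mult)
    then show ?thesis using s(1) by simp
  qed
  then have "(\<integral>x. Pt t k x \<partial>M) = 0"
    by (metis abs_le_zero_iff field_le_epsilon add_0)
  moreover have "AE x in M. Pt t k x = lam * Pt t h x + (-1) * Pt t f x"
    using l1_linear_lincomb[OF Pt.l1_linear_S[OF t] int_h f(1), of lam "-1"] by (simp add: k_def)
  then have "(\<integral>x. Pt t k x \<partial>M) = lam * (\<integral>x. Pt t h x \<partial>M) - (\<integral>x. Pt t f x \<partial>M)"
    using integral_cong_AE[of "Pt t k" M "\<lambda>x. lam * Pt t h x + (-1) * Pt t f x"]
      Pt.integrable_S[OF t] int_h f(1) by (simp add: k_def)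
  moreover have "lam * (\<integral>x. h x \<partial>M) = (\<integral>x. f x \<partial>M)"
    unfolding h_def by (rule resolvent_Pt_nonneg_and_mass(2)[OF lam(1) f])
  ultimately show ?thesis
    using const[of t] t by simp
qed

lemma stochastic_semigroup_Pt: "stochastic_semigroup M Pt"
  unfolding stochastic_semigroup_def
proof (intro conjI allI impI)
  show "c0_semigroup M Pt"
    using Pt_semigroup by (simp add: substochastic_semigroup_def)
  fix t :: real assume t: "0 \<le> t"
  show "stochastic M (Pt t)"
    unfolding stochastic_def is_density_def l1_def
    using Pt.l1_linear_S[OF t] Pt.integrable_S[OF t] Pt.S_nonneg[OF t] integral_Pt[OF t] by simp
qed

lemma resolvent_fstar_pos:
  assumes lam: "0 < lam"
  shows "AE x in M. 0 < R lam fstar x"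
  by (rule generator_resolvent_equation_pos[OF lam integrable_fstar fstar_pos
        resolvent_generator[OF lam integrable_fstar] resolvent_nonneg[OF lam integrable_fstar fstar_nonneg]])

end

theorem corollary3p3:
  fixes M :: "'a measure"
    and P :: "('a \<Rightarrow> real) \<Rightarrow> ('a \<Rightarrow> real)"
    and \<phi> :: "'a \<Rightarrow> real"
    and S Pt :: "real \<Rightarrow> ('a \<Rightarrow> real) \<Rightarrow> ('a \<Rightarrow> real)"
    and fstar :: "'a \<Rightarrow> real"
  assumes sf: "sigma_finite_measure M"
    and P_stoch: "stochastic M P"
    and phi_meas: "\<phi> \<in> borel_measurable M"
    and phi_nonneg: "\<And>x. 0 \<le> \<phi> x"
    and S_semi: "substochastic_semigroup M S"
    and dom_A: "\<And>f g. generator M S f g \<Longrightarrow> integrable M (\<lambda>x. \<phi> x * \<bar>f x\<bar>)"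
    and int_A: "\<And>f g. generator M S f g \<Longrightarrow> (AE x in M. 0 \<le> f x) \<Longrightarrow>
                  (\<integral>x. g x \<partial>M) = - (\<integral>x. \<phi> x * f x \<partial>M)"
    and Pt_semi: "substochastic_semigroup M Pt"
    and Pt_res: "\<And>l f. 0 < l \<Longrightarrow> l1 M f \<Longrightarrow>
        ((\<lambda>n. l1_dist M
            (resolvent M S l (\<lambda>x. \<Sum>k\<le>n. ((PphiR M P \<phi> S l) ^^ k) f x))
            (resolvent M Pt l f)) \<longlonglongrightarrow> 0)"
    and fstar_dens: "is_density M fstar"
    and fstar_pos: "AE x in M. 0 < fstar x"
    and K_subinv: "\<exists>g. l1 M g \<and>
        ((\<lambda>l. l1_dist M (PphiR M P \<phi> S l fstar) g) \<longlongrightarrow> 0) (at_right 0) \<and>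
        (AE x in M. g x \<le> fstar x)"
  shows "stochastic_semigroup M Pt \<and>
         (AE x in M. 0 < (SUP n::nat. ereal (resolvent M S (1 / real (Suc n)) fstar x)))"
proof -
  interpret minimal_semigroup M S P \<phi> fstar Pt
    by unfold_locales (fact S_semi P_stoch phi_meas phi_nonneg dom_A int_A fstar_dens fstar_pos
        K_subinv Pt_semi Pt_res)+
  have "AE x in M. 0 < (SUP n::nat. ereal (resolvent M S (1 / real (Suc n)) fstar x))"
    using resolvent_fstar_pos[OF zero_less_one]
  proof eventually_elim
    case (elim x)
    then have "ereal 0 < ereal (resolvent M S (1 / real (Suc 0)) fstar x)"
      by simp
    also have "\<dots> \<le> (SUP n::nat. ereal (resolvent M S (1 / real (Suc n)) fstar x))"
      by (rule SUP_upper) simp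
    finally show ?case
      by (simp add: zero_ereal_def)
  qed
  with stochastic_semigroup_Pt show ?thesis ..
qed

end
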